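(* Let $X\subseteq\mathbb{R}^n$ be nonempty, closed and convex, with some $D_X>0$ such that $\|u-v\|^2\le D_X^2$ for all $u,v\in X$. Let $F(x)=\mathbb{E}[F(x,\omega)]$ and assume: (A1) $F$ is $L$-Lipschitz continuous and monotone on $\mathbb{R}^n$; (A2) the solution set $X^*$ of VI$(X,F)$ is nonempty and compact and there is $C>0$ with $\|F(x^* )\|\le C$ for all $x^*\in X^*$; (A4) the state-dependent noise condition described in the context holds with constants $\nu_1,\nu_2\ge0$. Consider the scheme (v-SSE): for $k\ge0$, $$x_{k+\frac12}=\Pi_X\big(x_k-\gamma\bar F_k\big),\qquad x_{k+1}=\Pi_{C_k}\big(x_k-\gamma\bar F_{k+\frac12}\big),$$ where $\bar F_k=\frac1{N_k}\sum_{j=1}^{N_k}F(x_k,\omega_{j,k})$, $\bar F_{k+\frac12}=\frac1{N_k}\sum_{j=1}^{N_k}F(x_{k+\frac12},\omega_{j,k+\frac12})$, $C_k=\{y:(x_k-\gamma\bar F_k-x_{k+\frac12})^T(y-x_{k+\frac12})\le0\}$, with $0<\gamma\le\frac1{\sqrt2\,\tilde L}$, $\tilde L^2\triangleq L^2+\frac{4\nu_1^2}{N_0}$, and $\{N_k\}$ non-decreasing with $\sum_{k=1}^\infty\frac1{N_k}<M$ for some finite $M$. Let $\bar x_K=\frac1K\sum_{k=0}^{K-1}x_{k+\frac12}$. Then: (a) $\mathbb{E}[G(\bar x_K)]\le\mathcal{O}(1/K)$ for any $K$; (b) if $N_k\triangleq\lfloor k^a\rfloor$ with $a>1$, the oracle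 complexity to ensure $\mathbb{E}[G(\bar x_K)]\le\epsilon$ satisfies $\sum_{k=1}^KN_k\le\mathcal{O}(1/\epsilon^{a+1})$.
   Context: VI$(X,F)$: find $x^*\in X$ with $F(x^* )^T(x-x^* )\ge0$ for all $x\in X$. $\Pi_S$ is Euclidean projection onto $S$. Gap function: $G(x)\triangleq\sup_{y\in X}F(y)^T(x-y)$. Noise condition (A4): with $\mathcal{F}_k$ the history up to iteration $k$ and $\mathcal{F}_{k+\frac12}$ that history plus the samples at $x_k$, each sample error $w_k=F(x_k,\omega)-F(x_k)$, $w_{k+\frac12}=F(x_{k+\frac12},\omega)-F(x_{k+\frac12})$ has zero conditional mean given $\mathcal{F}_k$, resp. $\mathcal{F}_{k+\frac12}$, and conditional second moments bounded by $\nu_1^2\|x_k\|^2+\nu_2^2$, resp. $\nu_1^2\|x_{k+\frac12}\|^2+\nu_2^2$, a.s.; samples within a batch are independent given the history. Oracle complexity means the total number $\sum_kN_k$ of sampled map evaluations. *)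

theory Defs
  imports "HOL-Analysis.Analysis" "HOL-Probability.Probability"
begin

definition vi_sol :: "'a::euclidean_space set \<Rightarrow> ('a \<Rightarrow> 'a) \<Rightarrow> 'a set" where
  "vi_sol X F = {xs \<in> X. \<forall>x\<in>X. F xs \<bullet> (x - xs) \<ge> 0}"

definition gap :: "'a::euclidean_space set \<Rightarrow> ('a \<Rightarrow> 'a) \<Rightarrow> 'a \<Rightarrow> real" where
  "gap X F x = (SUP y\<in>X. F y \<bullet> (x - y))"

definition monotone_map :: "('a::euclidean_space \<Rightarrow> 'a) \<Rightarrow> bool" where
  "monotone_map F \<longleftrightarrow> (\<forall>x y. (F x - F y) \<bullet> (x - y) \<ge> 0)"

definition gen_sigma :: "'o measure \<Rightarrow> 'w measure \<Rightarrow> ('o \<Rightarrow> 'w) set \<Rightarrow> 'o measure" where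
  "gen_sigma M W fs = sigma (space M) {f -` B \<inter> space M | f B. f \<in> fs \<and> B \<in> sets W}"

text \<open>History F_k: all samples drawn in iterations 0..k-1 (x_0 is deterministic).
  s j i = omega_{j,i} (sample j at x_i), sh j i = omega_{j,i+1/2} (sample j at x_{i+1/2}).\<close>
definition hist :: "'o measure \<Rightarrow> 'w measure \<Rightarrow> (nat \<Rightarrow> nat) \<Rightarrow> (nat \<Rightarrow> nat \<Rightarrow> 'o \<Rightarrow> 'w)
    \<Rightarrow> (nat \<Rightarrow> nat \<Rightarrow> 'o \<Rightarrow> 'w) \<Rightarrow> nat \<Rightarrow> 'o measure" where
  "hist M W N s sh k = gen_sigma M W
     ({s j i | j i. i < k \<and> j < N i} \<union> {sh j i | j i. i < k \<and> j < N i})"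

definition hist_half :: "'o measure \<Rightarrow> 'w measure \<Rightarrow> (nat \<Rightarrow> nat) \<Rightarrow> (nat \<Rightarrow> nat \<Rightarrow> 'o \<Rightarrow> 'w)
    \<Rightarrow> (nat \<Rightarrow> nat \<Rightarrow> 'o \<Rightarrow> 'w) \<Rightarrow> nat \<Rightarrow> 'o measure" where
  "hist_half M W N s sh k = gen_sigma M W
     ({s j i | j i. i < k \<and> j < N i} \<union> {sh j i | j i. i < k \<and> j < N i} \<union> {s j k | j. j < N k})"

definition cond_indep :: "'o measure \<Rightarrow> 'o measure \<Rightarrow> 'w measure \<Rightarrow> 'i set \<Rightarrow> ('i \<Rightarrow> 'o \<Rightarrow> 'w) \<Rightarrow> bool" where
  "cond_indep M Fs W I Y \<longleftrightarrow>
     (\<forall>J A. J \<subseteq> I \<and> finite J \<and> J \<noteq> {} \<and> (\<forall>j\<in>J. A j \<in> sets W) \<longrightarrow>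
        (AE \<omega> in M. real_cond_exp M Fs (indicator (\<Inter>j\<in>J. Y j -` A j \<inter> space M)) \<omega>
                    = (\<Prod>j\<in>J. real_cond_exp M Fs (indicator (Y j -` A j \<inter> space M)) \<omega>)))"

text \<open>Noise condition (A4) for one batch: errors e j (j < n) of samples drawn at the point z,
  relative to the sigma algebra Fs (history).\<close>
definition noise_cond :: "'o measure \<Rightarrow> 'o measure \<Rightarrow> real \<Rightarrow> real \<Rightarrow> nat
    \<Rightarrow> (nat \<Rightarrow> 'o \<Rightarrow> 'a::euclidean_space) \<Rightarrow> ('o \<Rightarrow> 'a) \<Rightarrow> bool" where
  "noise_cond M Fs \<nu>1 \<nu>2 n e z \<longleftrightarrow>
     (\<forall>j<n. integrable M (e j) \<and>
        (\<forall>b\<in>Basis. AE \<omega> in M. real_cond_exp M Fs (\<lambda>\<omega>. e j \<omega> \<bullet> b) \<omega> = 0) \<and>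
        (AE \<omega> in M. nn_cond_exp M Fs (\<lambda>\<omega>. ennreal ((norm (e j \<omega>))\<^sup>2)) \<omega>
                    \<le> ennreal (\<nu>1\<^sup>2 * (norm (z \<omega>))\<^sup>2 + \<nu>2\<^sup>2)))"

end

theory Submission
  imports Defs
begin

(* The proof follows the extragradient analysis with an auxiliary (ghost) sequence.  Fix y in X
   and write v_k for the sampling error at x_{k+1/2}.  The two projections, Lipschitz continuity
   and monotonicity of F give, pathwise,
     2 gamma F(y)^T(x_{k+1/2} - y) <= Phi_k(y) - Phi_{k+1}(y) + Q_k,
   where Phi_k(y) = |x_k - y|^2 + |u_k - y|^2 with the ghost iterate u_{k+1} = Pi_X(u_k + gamma v_k),
   and Q_k consists of squared errors, a multiple of |x_k - x_{k+1/2}|^2 and the cross term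
   v_k^T(u_k - x~_k), where x~_k is the second step taken with the exact value F(x_{k+1/2}).
   Q_k does not depend on y, so telescoping and taking the supremum over y bound the gap of the
   average by (sup Phi_0 + sum_k Q_k) / (2 gamma K) before any expectation is taken.  In
   expectation the cross term vanishes, since u_k - x~_k is determined by the history F_{k+1/2};
   conditional independence within a batch gives E|v_k|^2 <= (nu1^2 E|x_{k+1/2}|^2 + nu2^2)/N_k,
   and likewise for the error at x_k; and the step size condition, which amounts to
   gamma^2 (2 L^2 + 4 nu1^2 / N_k) <= 1, absorbs the part of the latter that grows with
   |x_k - x_{k+1/2}|^2.  Hence E Q_k = O(1/N_k), which is summable.  For (b), K ~ c/eps
   iterations suffice and cost sum_{k<=K} N_k <= K^{a+1}. *)

section \<open>Projections and the extragradient step\<close>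

lemma closest_point_eqI:
  fixes S :: "'a::euclidean_space set"
  assumes "convex S" "closed S" "p \<in> S" "\<And>y. y \<in> S \<Longrightarrow> (a - p) \<bullet> (y - p) \<le> 0"
  shows "closest_point S a = p"
proof -
  have "dist a p \<le> dist a z" if z: "z \<in> S" for z
  proof -
    have "(dist a z)\<^sup>2 = (norm (a - p))\<^sup>2 + (norm (z - p))\<^sup>2 - 2 * ((a - p) \<bullet> (z - p))"
      by (simp add: dist_norm power2_norm_eq_inner inner_diff_left inner_diff_right inner_commute)
    also have "\<dots> \<ge> (dist a p)\<^sup>2"
      using assms(4)[OF z] zero_le_power2[of "norm (z - p)"] unfolding dist_norm by linarith
    finally show ?thesis by (simp add: power2_le_iff_abs_le)
  qed
  then show ?thesis using closest_point_unique[OF assms(1-3)] by simp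
qed

lemma closest_point_halfspace:
  fixes c h z :: "'a::euclidean_space"
  shows "closest_point {y. c \<bullet> (y - h) \<le> 0} z =
     (if c \<bullet> (z - h) \<le> 0 then z else z - ((c \<bullet> (z - h)) / (c \<bullet> c)) *\<^sub>R c)"
proof (cases "c \<bullet> (z - h) \<le> 0")
  case True
  then show ?thesis by (simp add: closest_point_self)
next
  case False
  then have cc: "c \<bullet> c > 0" by auto
  define t where "t = (c \<bullet> (z - h)) / (c \<bullet> c)"
  have t: "t \<ge> 0" using False cc by (simp add: t_def)
  have on_boundary: "c \<bullet> (z - t *\<^sub>R c - h) = 0"
    using cc by (simp add: t_def inner_diff_right)
  have "closest_point {y. c \<bullet> (y - h) \<le> 0} z = z - t *\<^sub>R c"
  proof (rule closest_point_eqI)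
    show "convex {y. c \<bullet> (y - h) \<le> 0}"
      by (simp add: inner_diff_right convex_halfspace_le)
    show "closed {y. c \<bullet> (y - h) \<le> 0}"
      by (simp add: inner_diff_right closed_halfspace_le)
    show "z - t *\<^sub>R c \<in> {y. c \<bullet> (y - h) \<le> 0}" using on_boundary by simp
    fix y assume "y \<in> {y. c \<bullet> (y - h) \<le> 0}"
    then have "t * (c \<bullet> (y - h)) \<le> 0" using t by (simp add: mult_nonneg_nonpos)
    have "(z - (z - t *\<^sub>R c)) \<bullet> (y - (z - t *\<^sub>R c))
        = t * (c \<bullet> (y - h)) - t * (c \<bullet> (z - t *\<^sub>R c - h))"
      by (simp add: inner_diff_right algebra_simps)
    also have "\<dots> \<le> 0" using on_boundary \<open>t * (c \<bullet> (y - h)) \<le> 0\<close> by simp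
    finally show "(z - (z - t *\<^sub>R c)) \<bullet> (y - (z - t *\<^sub>R c)) \<le> 0" .
  qed
  then show ?thesis using False by (simp add: t_def)
qed

lemma borel_measurable_closest_point_halfspace[measurable]:
  fixes c h z :: "'o \<Rightarrow> 'a::euclidean_space"
  assumes [measurable]: "c \<in> borel_measurable A" "h \<in> borel_measurable A" "z \<in> borel_measurable A"
  shows "(\<lambda>\<omega>. closest_point {y. c \<omega> \<bullet> (y - h \<omega>) \<le> 0} (z \<omega>)) \<in> borel_measurable A"
  unfolding closest_point_halfspace by measurable

lemma two_inner_le_sum_squares:
  fixes p q :: "'a::real_inner"
  shows "2 * (p \<bullet> q) \<le> (norm p)\<^sup>2 + (norm q)\<^sup>2"
  using zero_le_power2[of "norm (p - q)"]
  by (simp add: power2_norm_eq_inner inner_diff_left inner_diff_right inner_commute)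

lemma norm_add_squared_le:
  fixes p q :: "'a::real_inner"
  shows "(norm (p + q))\<^sup>2 \<le> 2 * (norm p)\<^sup>2 + 2 * (norm q)\<^sup>2"
  using two_inner_le_sum_squares[of p q]
  by (simp add: power2_norm_eq_inner inner_add_left inner_add_right inner_commute)

lemma extragradient_projection_ineq:
  fixes X :: "'a::euclidean_space set"
  assumes X: "convex X" "closed X" and y: "y \<in> X"
    and h: "h = closest_point X (z - \<gamma> *\<^sub>R a)"
    and C: "C = {y. (z - \<gamma> *\<^sub>R a - h) \<bullet> (y - h) \<le> 0}"
    and x': "x' = closest_point C (z - \<gamma> *\<^sub>R b)"
  shows "(norm (x' - y))\<^sup>2 \<le> (norm (z - y))\<^sup>2 - (norm (z - h))\<^sup>2 - (norm (x' - h))\<^sup>2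
           + 2 * \<gamma> * (a \<bullet> (x' - h)) + 2 * \<gamma> * (b \<bullet> (y - x'))"
proof -
  have C_convex: "convex C" unfolding C by (simp add: inner_diff_right convex_halfspace_le)
  have C_closed: "closed C" unfolding C by (simp add: inner_diff_right closed_halfspace_le)
  have yC: "y \<in> C" unfolding C h using closest_point_dot[OF X y] by simp
  have "((z - \<gamma> *\<^sub>R b) - x') \<bullet> (y - x') \<le> 0"
    unfolding x' by (rule closest_point_dot[OF C_convex C_closed yC])
  then have "(norm (x' - y))\<^sup>2 \<le> (norm (z - y))\<^sup>2 - (norm (z - x'))\<^sup>2 + 2 * \<gamma> * (b \<bullet> (y - x'))"
    by (simp add: power2_norm_eq_inner inner_diff_left inner_diff_right inner_commute algebra_simps)
  moreover have "x' \<in> C" unfolding x' using closest_point_in_set[OF C_closed] yC by blast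
  then have "(norm (z - x'))\<^sup>2 \<ge> (norm (z - h))\<^sup>2 + (norm (x' - h))\<^sup>2 - 2 * \<gamma> * (a \<bullet> (x' - h))"
    unfolding C by (simp add: power2_norm_eq_inner inner_diff_left inner_diff_right inner_commute algebra_simps)
  ultimately show ?thesis by linarith
qed

text \<open>Here a and b stand for the sampled values of F z and F h.  Their errors enter quadratically,
  except in the last term, which is linear in b - F h and has mean zero in the application.\<close>
lemma extragradient_step_ineq:
  fixes X :: "'a::euclidean_space set" and F :: "'a \<Rightarrow> 'a"
  assumes X: "convex X" "closed X" and y: "y \<in> X"
    and lip: "L-lipschitz_on UNIV F" and mono: "monotone_map F" and \<gamma>: "\<gamma> > 0"
    and h: "h = closest_point X (z - \<gamma> *\<^sub>R a)"
    and C: "C = {y. (z - \<gamma> *\<^sub>R a - h) \<bullet> (y - h) \<le> 0}"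
    and x': "x' = closest_point C (z - \<gamma> *\<^sub>R b)"
    and xt: "xt = closest_point C (z - \<gamma> *\<^sub>R F h)"
  shows "(norm (x' - y))\<^sup>2 \<le> (norm (z - y))\<^sup>2 + (2 * \<gamma>\<^sup>2 * L\<^sup>2 - 1) * (norm (z - h))\<^sup>2
        + 2 * \<gamma>\<^sup>2 * (norm (a - F z))\<^sup>2 + 2 * \<gamma>\<^sup>2 * (norm (b - F h))\<^sup>2
        - 2 * \<gamma> * (F y \<bullet> (h - y)) + 2 * \<gamma> * ((b - F h) \<bullet> (y - xt))"
proof -
  define v where "v = b - F h"
  have C_convex: "convex C" unfolding C by (simp add: inner_diff_right convex_halfspace_le)
  have C_closed: "closed C" unfolding C by (simp add: inner_diff_right closed_halfspace_le)
  have "h \<in> C" unfolding C by simp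
  then have C_ne: "C \<noteq> {}" by blast
  have split: "2 * \<gamma> * (b \<bullet> (y - x')) + 2 * \<gamma> * (a \<bullet> (x' - h))
      = 2 * \<gamma> * ((a - F h) \<bullet> (x' - h)) - 2 * \<gamma> * (v \<bullet> (x' - xt))
        + 2 * \<gamma> * (F h \<bullet> (y - h)) + 2 * \<gamma> * (v \<bullet> (y - xt))"
    unfolding v_def by (simp add: inner_diff_left inner_diff_right inner_commute algebra_simps)
  have "2 * ((\<gamma> *\<^sub>R (a - F h)) \<bullet> (x' - h)) \<le> (norm (\<gamma> *\<^sub>R (a - F h)))\<^sup>2 + (norm (x' - h))\<^sup>2"
    by (rule two_inner_le_sum_squares)
  then have young: "2 * \<gamma> * ((a - F h) \<bullet> (x' - h)) \<le> \<gamma>\<^sup>2 * (norm (a - F h))\<^sup>2 + (norm (x' - h))\<^sup>2"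
    using \<gamma> by (simp add: power_mult_distrib)
  have "norm (F z - F h) \<le> L * norm (z - h)"
    by (rule lipschitz_on_normD[OF lip]) auto
  then have "(norm (F z - F h))\<^sup>2 \<le> L\<^sup>2 * (norm (z - h))\<^sup>2"
    by (metis norm_ge_zero power_mono power_mult_distrib)
  then have "(norm (a - F h))\<^sup>2 \<le> 2 * L\<^sup>2 * (norm (z - h))\<^sup>2 + 2 * (norm (a - F z))\<^sup>2"
    using norm_add_squared_le[of "F z - F h" "a - F z"] by simp
  then have lipschitz: "\<gamma>\<^sup>2 * (norm (a - F h))\<^sup>2 \<le> \<gamma>\<^sup>2 * (2 * L\<^sup>2 * (norm (z - h))\<^sup>2 + 2 * (norm (a - F z))\<^sup>2)"
    by (intro mult_left_mono) auto
  have "norm (x' - xt) \<le> norm (\<gamma> *\<^sub>R v)"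
    using closest_point_lipschitz[OF C_convex C_closed C_ne, of "z - \<gamma> *\<^sub>R b" "z - \<gamma> *\<^sub>R F h"]
    unfolding x' xt v_def by (simp add: dist_norm norm_minus_commute algebra_simps)
  then have "norm (x' - xt) \<le> \<gamma> * norm v" using \<gamma> by simp
  have "- (v \<bullet> (x' - xt)) \<le> norm v * norm (x' - xt)"
    using Cauchy_Schwarz_ineq2[of v "x' - xt"] abs_ge_minus_self[of "v \<bullet> (x' - xt)"] by linarith
  also have "\<dots> \<le> norm v * (\<gamma> * norm v)"
    using \<open>norm (x' - xt) \<le> \<gamma> * norm v\<close> by (rule mult_left_mono) simp
  finally have "- (v \<bullet> (x' - xt)) \<le> \<gamma> * (norm v)\<^sup>2" by (simp add: power2_eq_square ac_simps)
  then have nonexpansive: "- (2 * \<gamma> * (v \<bullet> (x' - xt))) \<le> 2 * \<gamma>\<^sup>2 * (norm v)\<^sup>2"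
    using mult_left_mono[of _ _ "2 * \<gamma>"] \<gamma> by (fastforce simp: power2_eq_square algebra_simps)
  have "(F h - F y) \<bullet> (h - y) \<ge> 0" using mono unfolding monotone_map_def by blast
  then have monotone: "F h \<bullet> (y - h) \<le> - (F y \<bullet> (h - y))"
    by (simp add: inner_diff_left inner_diff_right inner_commute algebra_simps)
  show ?thesis
    using extragradient_projection_ineq[OF X y h C x'] split young lipschitz nonexpansive
      mult_left_mono[OF monotone, of "2 * \<gamma>"] \<gamma>
    unfolding v_def by (simp add: algebra_simps)
qed

lemma closest_point_step_ineq:
  fixes X :: "'a::euclidean_space set"
  assumes "convex X" "closed X" "y \<in> X"
  shows "2 * \<gamma> * (v \<bullet> (y - u)) \<le> (norm (u - y))\<^sup>2 - (norm (closest_point X (u + \<gamma> *\<^sub>R v) - y))\<^sup>2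
           + \<gamma>\<^sup>2 * (norm v)\<^sup>2"
proof -
  have "norm (closest_point X (u + \<gamma> *\<^sub>R v) - y) \<le> norm (u + \<gamma> *\<^sub>R v - y)"
    using closest_point_lipschitz[OF assms(1,2), of "u + \<gamma> *\<^sub>R v" y] closest_point_self[OF assms(3)] assms(3)
    by (auto simp: dist_norm)
  then have "(norm (closest_point X (u + \<gamma> *\<^sub>R v) - y))\<^sup>2 \<le> (norm ((u - y) + \<gamma> *\<^sub>R v))\<^sup>2"
    by (simp add: power_mono algebra_simps)
  moreover have "(norm ((u - y) + \<gamma> *\<^sub>R v))\<^sup>2 = (norm (u - y))\<^sup>2 - 2 * \<gamma> * (v \<bullet> (y - u)) + \<gamma>\<^sup>2 * (norm v)\<^sup>2"
    unfolding power2_norm_eq_inner by (simp add: power2_norm_eq_inner inner_add_left inner_add_right inner_diff_left inner_diff_right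
        inner_commute power2_eq_square algebra_simps)
  ultimately show ?thesis by linarith
qed

section \<open>Square-integrable random vectors\<close>

lemma integrable_inner_square_integrable:
  fixes f g :: "'o \<Rightarrow> 'a::euclidean_space"
  assumes [measurable]: "f \<in> borel_measurable M" "g \<in> borel_measurable M"
    and "integrable M (\<lambda>x. (norm (f x))\<^sup>2)" "integrable M (\<lambda>x. (norm (g x))\<^sup>2)"
  shows "integrable M (\<lambda>x. f x \<bullet> g x)"
proof (rule Bochner_Integration.integrable_bound)
  show "integrable M (\<lambda>x. (norm (f x))\<^sup>2 + (norm (g x))\<^sup>2)"
    using assms(3,4) by (rule Bochner_Integration.integrable_add)
  show "(\<lambda>x. f x \<bullet> g x) \<in> borel_measurable M" by measurable
  have "\<bar>f x \<bullet> g x\<bar> \<le> (norm (f x))\<^sup>2 + (norm (g x))\<^sup>2" for x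
    using Cauchy_Schwarz_ineq2[of "f x" "g x"] sum_squares_bound[of "norm (f x)" "norm (g x)"]
      mult_nonneg_nonneg[OF norm_ge_zero norm_ge_zero, of "f x" "g x"]
    by linarith
  then show "AE x in M. norm (f x \<bullet> g x) \<le> norm ((norm (f x))\<^sup>2 + (norm (g x))\<^sup>2)"
    by simp
qed

lemma integrable_mult_square_integrable:
  fixes f g :: "'o \<Rightarrow> real"
  assumes "f \<in> borel_measurable M" "g \<in> borel_measurable M"
    and "integrable M (\<lambda>x. (f x)\<^sup>2)" "integrable M (\<lambda>x. (g x)\<^sup>2)"
  shows "integrable M (\<lambda>x. f x * g x)"
  using integrable_inner_square_integrable[of f M g] assms by simp

lemma integrable_inner_const_squared:
  fixes f :: "'o \<Rightarrow> 'a::euclidean_space"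
  assumes [measurable]: "f \<in> borel_measurable M" and "integrable M (\<lambda>x. (norm (f x))\<^sup>2)"
  shows "integrable M (\<lambda>x. (f x \<bullet> c)\<^sup>2)"
proof (rule Bochner_Integration.integrable_bound)
  show "integrable M (\<lambda>x. (norm c)\<^sup>2 * (norm (f x))\<^sup>2)" using assms(2) by simp
  show "(\<lambda>x. (f x \<bullet> c)\<^sup>2) \<in> borel_measurable M" by measurable
  have "(f x \<bullet> c)\<^sup>2 \<le> (norm c)\<^sup>2 * (norm (f x))\<^sup>2" for x
  proof -
    have "\<bar>f x \<bullet> c\<bar>\<^sup>2 \<le> (norm (f x) * norm c)\<^sup>2"
      by (rule power_mono[OF Cauchy_Schwarz_ineq2 abs_ge_zero])
    then show ?thesis by (simp add: power_mult_distrib mult.commute)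
  qed
  then show "AE x in M. norm ((f x \<bullet> c)\<^sup>2) \<le> norm ((norm c)\<^sup>2 * (norm (f x))\<^sup>2)" by simp
qed

lemma integrable_bounded_mult:
  fixes f c :: "'o \<Rightarrow> real"
  assumes "integrable M f" "c \<in> borel_measurable M" "AE \<omega> in M. \<bar>c \<omega>\<bar> \<le> B"
  shows "integrable M (\<lambda>\<omega>. c \<omega> * f \<omega>)"
proof (rule Bochner_Integration.integrable_bound)
  show "integrable M (\<lambda>\<omega>. B * f \<omega>)" using assms(1) by simp
  show "(\<lambda>\<omega>. c \<omega> * f \<omega>) \<in> borel_measurable M" using assms by measurable
  show "AE \<omega> in M. norm (c \<omega> * f \<omega>) \<le> norm (B * f \<omega>)"
    using assms(3)
  proof eventually_elim
    case (elim \<omega>)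
    then have "\<bar>c \<omega>\<bar> * \<bar>f \<omega>\<bar> \<le> \<bar>B\<bar> * \<bar>f \<omega>\<bar>" by (intro mult_right_mono) auto
    then show ?case by (simp add: abs_mult)
  qed
qed

lemma (in finite_measure) square_integrable_add:
  fixes f g :: "'a \<Rightarrow> 'b::euclidean_space"
  assumes [measurable]: "f \<in> borel_measurable M" "g \<in> borel_measurable M"
    and "integrable M (\<lambda>\<omega>. (norm (f \<omega>))\<^sup>2)" "integrable M (\<lambda>\<omega>. (norm (g \<omega>))\<^sup>2)"
  shows "integrable M (\<lambda>\<omega>. (norm (f \<omega> + g \<omega>))\<^sup>2)"
proof (rule Bochner_Integration.integrable_bound)
  show "integrable M (\<lambda>\<omega>. 2 * (norm (f \<omega>))\<^sup>2 + 2 * (norm (g \<omega>))\<^sup>2)" using assms(3,4) by simp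
  show "AE \<omega> in M. norm ((norm (f \<omega> + g \<omega>))\<^sup>2) \<le> norm (2 * (norm (f \<omega>))\<^sup>2 + 2 * (norm (g \<omega>))\<^sup>2)"
    by (intro AE_I2) (simp add: norm_add_squared_le)
qed measurable

lemma (in finite_measure) square_integrable_norm_le:
  fixes f :: "'a \<Rightarrow> 'b::euclidean_space" and g :: "'a \<Rightarrow> 'c::euclidean_space"
  assumes [measurable]: "f \<in> borel_measurable M" "g \<in> borel_measurable M"
    and g_sq: "integrable M (\<lambda>\<omega>. (norm (g \<omega>))\<^sup>2)"
    and le: "\<And>\<omega>. \<omega> \<in> space M \<Longrightarrow> norm (f \<omega>) \<le> c + norm (g \<omega>)"
  shows "integrable M (\<lambda>\<omega>. (norm (f \<omega>))\<^sup>2)"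
proof (rule Bochner_Integration.integrable_bound)
  show "integrable M (\<lambda>\<omega>. 2 * c\<^sup>2 + 2 * (norm (g \<omega>))\<^sup>2)" using g_sq by simp
  have "(norm (f \<omega>))\<^sup>2 \<le> 2 * c\<^sup>2 + 2 * (norm (g \<omega>))\<^sup>2" if "\<omega> \<in> space M" for \<omega>
  proof -
    have "(norm (f \<omega>))\<^sup>2 \<le> (c + norm (g \<omega>))\<^sup>2" using le[OF that] by (intro power_mono) auto
    then show ?thesis using norm_add_squared_le[of c "norm (g \<omega>)"] by simp
  qed
  then show "AE \<omega> in M. norm ((norm (f \<omega>))\<^sup>2) \<le> norm (2 * c\<^sup>2 + 2 * (norm (g \<omega>))\<^sup>2)"
    by (intro AE_I2) (simp add: abs_le_iff)
qed measurable

section \<open>Conditionally independent samples\<close>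

lemma emeasure_distr_density_eq_integral:
  fixes T :: "'o \<Rightarrow> 'b" and \<phi> :: "'o \<Rightarrow> real"
  assumes T: "T \<in> measurable M N" and \<phi>: "integrable M \<phi>" "AE \<omega> in M. \<phi> \<omega> \<ge> 0"
    and E: "E \<in> sets N"
  shows "emeasure (distr (density M \<phi>) N T) E = ennreal (\<integral>\<omega>. \<phi> \<omega> * indicator E (T \<omega>) \<partial>M)"
proof -
  have [measurable]: "\<phi> \<in> borel_measurable M" using \<phi> by auto
  have TE: "T -` E \<inter> space M \<in> sets M" using T E by (simp add: measurable_sets)
  have "integrable M (\<lambda>\<omega>. \<phi> \<omega> * indicator (T -` E \<inter> space M) \<omega>)"
    using integrable_real_mult_indicator[OF TE \<phi>(1)] by simp
  then have int: "integrable M (\<lambda>\<omega>. \<phi> \<omega> * indicator E (T \<omega>))"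
    by (rule Bochner_Integration.integrable_cong[THEN iffD1, rotated -1]) (auto simp: indicator_def)
  have "emeasure (distr (density M \<phi>) N T) E = emeasure (density M \<phi>) (T -` E \<inter> space M)"
    using T E by (simp add: emeasure_distr)
  also have "\<dots> = (\<integral>\<^sup>+ \<omega>. ennreal (\<phi> \<omega>) * indicator (T -` E \<inter> space M) \<omega> \<partial>M)"
    using TE by (simp add: emeasure_density)
  also have "\<dots> = (\<integral>\<^sup>+ \<omega>. ennreal (\<phi> \<omega> * indicator E (T \<omega>)) \<partial>M)"
    by (rule nn_integral_cong) (auto simp: indicator_def)
  also have "\<dots> = ennreal (\<integral>\<omega>. \<phi> \<omega> * indicator E (T \<omega>) \<partial>M)"
    using \<phi>(2) by (intro nn_integral_eq_integral[OF int]) auto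
  finally show ?thesis .
qed

lemma integral_weighted_eq_if_eq_on_rectangles:
  fixes T :: "'o \<Rightarrow> 'a::euclidean_space \<times> 'w" and \<phi> \<psi> :: "'o \<Rightarrow> real" and g :: "'a \<times> 'w \<Rightarrow> real"
  assumes T: "T \<in> measurable M (borel \<Otimes>\<^sub>M W)"
    and \<phi>: "integrable M \<phi>" "AE \<omega> in M. \<phi> \<omega> \<ge> 0"
    and \<psi>: "integrable M \<psi>" "AE \<omega> in M. \<psi> \<omega> \<ge> 0"
    and rect: "\<And>B A. B \<in> sets borel \<Longrightarrow> A \<in> sets W \<Longrightarrow>
       (\<integral>\<omega>. \<phi> \<omega> * indicator (B \<times> A) (T \<omega>) \<partial>M) = (\<integral>\<omega>. \<psi> \<omega> * indicator (B \<times> A) (T \<omega>) \<partial>M)"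
    and g: "g \<in> borel_measurable (borel \<Otimes>\<^sub>M W)"
  shows "(\<integral>\<omega>. \<phi> \<omega> * g (T \<omega>) \<partial>M) = (\<integral>\<omega>. \<psi> \<omega> * g (T \<omega>) \<partial>M)"
proof -
  have [measurable]: "\<phi> \<in> borel_measurable M" "\<psi> \<in> borel_measurable M" using \<phi> \<psi> by auto
  let ?E = "{a \<times> b | a b. a \<in> sets (borel::'a measure) \<and> b \<in> sets W}"
  let ?\<Omega> = "UNIV \<times> space W"
  have space: "?\<Omega> \<in> sets (borel \<Otimes>\<^sub>M W)"
    by (metis sets.top space_borel space_pair_measure)
  have distr_eq: "distr (density M \<phi>) (borel \<Otimes>\<^sub>M W) T = distr (density M \<psi>) (borel \<Otimes>\<^sub>M W) T"
  proof (rule measure_eqI_generator_eq[OF Int_stable_pair_measure_generator[of borel W],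
        where \<Omega> = ?\<Omega> and A = "\<lambda>_. ?\<Omega>"])
    show "?E \<subseteq> Pow ?\<Omega>" using sets.space_closed[of W] by auto
    show "sets (distr (density M \<phi>) (borel \<Otimes>\<^sub>M W) T) = sigma_sets ?\<Omega> ?E"
      "sets (distr (density M \<psi>) (borel \<Otimes>\<^sub>M W) T) = sigma_sets ?\<Omega> ?E"
      by (simp_all add: sets_pair_measure)
    fix R assume "R \<in> ?E"
    then obtain B A where R: "R = B \<times> A" "B \<in> sets borel" "A \<in> sets W" by auto
    then have R_sets: "R \<in> sets (borel \<Otimes>\<^sub>M W)" by simp
    have "emeasure (distr (density M \<phi>) (borel \<Otimes>\<^sub>M W) T) R = ennreal (\<integral>\<omega>. \<phi> \<omega> * indicator R (T \<omega>) \<partial>M)"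
      by (rule emeasure_distr_density_eq_integral[OF T \<phi> R_sets])
    also have "\<dots> = ennreal (\<integral>\<omega>. \<psi> \<omega> * indicator R (T \<omega>) \<partial>M)"
      unfolding R(1) rect[OF R(2,3)] ..
    also have "\<dots> = emeasure (distr (density M \<psi>) (borel \<Otimes>\<^sub>M W) T) R"
      by (rule emeasure_distr_density_eq_integral[OF T \<psi> R_sets, symmetric])
    finally show "emeasure (distr (density M \<phi>) (borel \<Otimes>\<^sub>M W) T) R
        = emeasure (distr (density M \<psi>) (borel \<Otimes>\<^sub>M W) T) R" .
  next
    have "?\<Omega> \<in> ?E" by (intro CollectI exI[of _ UNIV] exI[of _ "space W"]) auto
    then show "range (\<lambda>_. ?\<Omega>) \<subseteq> ?E" by auto
    show "(\<Union>i. ?\<Omega>) = ?\<Omega>" by simp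
    show "emeasure (distr (density M \<phi>) (borel \<Otimes>\<^sub>M W) T) ?\<Omega> \<noteq> \<infinity>"
      using emeasure_distr_density_eq_integral[OF T \<phi> space] by simp
  qed
  have via_distr: "(\<integral>\<omega>. \<rho> \<omega> * g (T \<omega>) \<partial>M) = integral\<^sup>L (distr (density M \<rho>) (borel \<Otimes>\<^sub>M W) T) g"
    if "\<rho> \<in> borel_measurable M" "AE \<omega> in M. \<rho> \<omega> \<ge> 0" for \<rho>
  proof -
    have "T \<in> measurable (density M \<rho>) (borel \<Otimes>\<^sub>M W)" using T by simp
    then have "integral\<^sup>L (distr (density M \<rho>) (borel \<Otimes>\<^sub>M W) T) g = (\<integral>\<omega>. g (T \<omega>) \<partial>density M \<rho>)"
      using g by (rule integral_distr)
    also have "\<dots> = (\<integral>\<omega>. \<rho> \<omega> * g (T \<omega>) \<partial>M)"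
      using that measurable_compose[OF T g] by (simp add: integral_density)
    finally show ?thesis by simp
  qed
  show ?thesis
    using via_distr[of \<phi>] via_distr[of \<psi>] \<phi>(2) \<psi>(2) unfolding distr_eq by simp
qed

lemma cond_indep_pair:
  assumes ci: "cond_indep M F W I t" and ij: "i \<in> I" "j \<in> I" "i \<noteq> j"
    and A: "A \<in> sets W" "A' \<in> sets W"
  shows "AE \<omega> in M. real_cond_exp M F (indicator ((t i -` A \<inter> space M) \<inter> (t j -` A' \<inter> space M))) \<omega>
     = real_cond_exp M F (indicator (t i -` A \<inter> space M)) \<omega>
       * real_cond_exp M F (indicator (t j -` A' \<inter> space M)) \<omega>"
proof -
  define AA where "AA k = (if k = i then A else A')" for k
  have "{i, j} \<subseteq> I \<and> finite {i, j} \<and> {i, j} \<noteq> {} \<and> (\<forall>k\<in>{i, j}. AA k \<in> sets W)"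
    using ij A by (auto simp: AA_def)
  then have "AE \<omega> in M. real_cond_exp M F (indicator (\<Inter>k\<in>{i, j}. t k -` AA k \<inter> space M)) \<omega>
      = (\<Prod>k\<in>{i, j}. real_cond_exp M F (indicator (t k -` AA k \<inter> space M)) \<omega>)"
    using ci unfolding cond_indep_def by blast
  then show ?thesis using ij(3) by (simp add: AA_def)
qed

lemma cond_indep_rectangle_integral:
  fixes Z :: "'o \<Rightarrow> 'a::euclidean_space" and t :: "'i \<Rightarrow> 'o \<Rightarrow> 'w"
  assumes M: "prob_space M" and sub: "subalgebra M F" and Z: "Z \<in> borel_measurable F"
    and t: "t i \<in> measurable M W" "t j \<in> measurable M W"
    and ci: "cond_indep M F W I t" and ij: "i \<in> I" "j \<in> I" "i \<noteq> j"
    and [measurable]: "B0 \<in> sets borel" "A0 \<in> sets W" "B \<in> sets borel" "A \<in> sets W"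
  shows "(\<integral>\<omega>. indicator B0 (Z \<omega>) * indicator A0 (t j \<omega>) * indicator (B \<times> A) (Z \<omega>, t i \<omega>) \<partial>M)
       = (\<integral>\<omega>. indicator B0 (Z \<omega>) * real_cond_exp M F (indicator (t j -` A0 \<inter> space M)) \<omega>
               * indicator (B \<times> A) (Z \<omega>, t i \<omega>) \<partial>M)"
proof -
  interpret P: prob_space M by fact
  interpret S: finite_measure_subalgebra M F by unfold_locales (fact sub)
  have [measurable]: "t i \<in> measurable M W" "t j \<in> measurable M W" by (fact t)+
  define pr where "pr k A' = real_cond_exp M F (indicator (t k -` A' \<inter> space M))" for k A'
  define c where "c \<omega> = (indicator (B0 \<inter> B) (Z \<omega>) :: real)" for \<omega>
  have c_F[measurable]: "c \<in> borel_measurable F" unfolding c_def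
    by (rule measurable_compose[OF Z borel_measurable_indicator]) simp
  have c_M[measurable]: "c \<in> borel_measurable M" by (rule measurable_from_subalg[OF sub c_F])
  have c_bound: "\<bar>c \<omega>\<bar> \<le> 1" for \<omega> by (simp add: c_def)
  have preimage[measurable]: "t k -` A' \<inter> space M \<in> sets M" if "t k \<in> measurable M W" "A' \<in> sets W" for k A'
    using that by (simp add: measurable_sets)
  have indicator_int: "integrable M (indicator S :: 'o \<Rightarrow> real)" if "S \<in> sets M" for S
    using that by (intro P.integrable_const_bound[where B=1]) (auto simp: indicator_def)
  have pr_int: "integrable M (pr k A')" if "t k \<in> measurable M W" "A' \<in> sets W" for k A'
    unfolding pr_def using that by (intro S.real_cond_exp_int(1) indicator_int preimage)
  let ?I = "(t i -` A \<inter> space M) \<inter> (t j -` A0 \<inter> space M)"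
  have "(\<integral>\<omega>. indicator B0 (Z \<omega>) * indicator A0 (t j \<omega>) * indicator (B \<times> A) (Z \<omega>, t i \<omega>) \<partial>M)
      = (\<integral>\<omega>. c \<omega> * indicator ?I \<omega> \<partial>M)"
    by (rule Bochner_Integration.integral_cong) (auto simp: c_def indicator_def)
  also have "\<dots> = (\<integral>\<omega>. c \<omega> * real_cond_exp M F (indicator ?I) \<omega> \<partial>M)"
    by (rule S.real_cond_exp_intg(2)[symmetric])
      (auto intro!: integrable_bounded_mult[where B=1] indicator_int c_bound)
  also have "\<dots> = (\<integral>\<omega>. (c \<omega> * pr j A0 \<omega>) * pr i A \<omega> \<partial>M)"
    using cond_indep_pair[OF ci ij, of A A0] unfolding pr_def
    by (intro integral_cong_AE) (auto elim: AE_mp)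
  also have "\<dots> = (\<integral>\<omega>. (c \<omega> * pr j A0 \<omega>) * indicator (t i -` A \<inter> space M) \<omega> \<partial>M)"
    unfolding pr_def[of i]
  proof (rule S.real_cond_exp_intg(2))
    have "integrable M (\<lambda>\<omega>. (c \<omega> * indicator (t i -` A \<inter> space M) \<omega>) * pr j A0 \<omega>)"
      using pr_int[OF t(2), of A0] c_bound
      by (intro integrable_bounded_mult[where B=1]) (auto simp: indicator_def)
    then show "integrable M (\<lambda>\<omega>. c \<omega> * pr j A0 \<omega> * indicator (t i -` A \<inter> space M) \<omega>)"
      by (simp add: ac_simps)
    show "(\<lambda>\<omega>. c \<omega> * pr j A0 \<omega>) \<in> borel_measurable F" unfolding pr_def by measurable
  qed measurable
  also have "\<dots> = (\<integral>\<omega>. indicator B0 (Z \<omega>) * pr j A0 \<omega> * indicator (B \<times> A) (Z \<omega>, t i \<omega>) \<partial>M)"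
    by (rule Bochner_Integration.integral_cong) (auto simp: c_def indicator_def)
  finally show ?thesis unfolding pr_def .
qed

lemma cond_indep_integral_rectangle_zero:
  fixes Z :: "'o \<Rightarrow> 'a::euclidean_space" and t :: "'i \<Rightarrow> 'o \<Rightarrow> 'w" and g :: "'a \<times> 'w \<Rightarrow> real"
  assumes M: "prob_space M" and sub: "subalgebra M F" and Z: "Z \<in> borel_measurable F"
    and t: "t i \<in> measurable M W" "t j \<in> measurable M W"
    and ci: "cond_indep M F W I t" and ij: "i \<in> I" "j \<in> I" "i \<noteq> j"
    and g: "g \<in> borel_measurable (borel \<Otimes>\<^sub>M W)" and g_int: "integrable M (\<lambda>\<omega>. g (Z \<omega>, t i \<omega>))"
    and mean0: "AE \<omega> in M. real_cond_exp M F (\<lambda>\<omega>. g (Z \<omega>, t i \<omega>)) \<omega> = 0"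
    and [measurable]: "B0 \<in> sets borel" "A0 \<in> sets W"
  shows "(\<integral>\<omega>. indicator B0 (Z \<omega>) * indicator A0 (t j \<omega>) * g (Z \<omega>, t i \<omega>) \<partial>M) = 0"
proof -
  interpret P: prob_space M by fact
  interpret S: finite_measure_subalgebra M F by unfold_locales (fact sub)
  have [measurable]: "t i \<in> measurable M W" "t j \<in> measurable M W" by (fact t)+
  have Z_M[measurable]: "Z \<in> borel_measurable M" by (rule measurable_from_subalg[OF sub Z])
  define q where "q = real_cond_exp M F (indicator (t j -` A0 \<inter> space M))"
  have q_F[measurable]: "q \<in> borel_measurable F" unfolding q_def by simp
  have q_M[measurable]: "q \<in> borel_measurable M" by (rule measurable_from_subalg[OF sub q_F])
  have ind_int: "integrable M (indicator (t j -` A0 \<inter> space M) :: 'o \<Rightarrow> real)"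
    by (intro P.integrable_const_bound[where B=1]) (auto simp: indicator_def measurable_sets)
  have "AE \<omega> in M. 0 \<le> q \<omega>" "AE \<omega> in M. q \<omega> \<le> 1" unfolding q_def
    by (intro S.real_cond_exp_ge_c S.real_cond_exp_le_c ind_int; simp add: indicator_def)+
  then have q_bound: "AE \<omega> in M. 0 \<le> q \<omega> \<and> \<bar>q \<omega>\<bar> \<le> 1" by eventually_elim auto
  have weight_int: "integrable M (\<lambda>\<omega>. indicator B0 (Z \<omega>) * q \<omega>)"
    using S.real_cond_exp_int(1)[OF ind_int]
    by (intro integrable_bounded_mult[where B=1]) (auto simp: q_def indicator_def)
  have "(\<integral>\<omega>. indicator B0 (Z \<omega>) * indicator A0 (t j \<omega>) * g (Z \<omega>, t i \<omega>) \<partial>M)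
      = (\<integral>\<omega>. (indicator B0 (Z \<omega>) * q \<omega>) * g (Z \<omega>, t i \<omega>) \<partial>M)"
  proof (rule integral_weighted_eq_if_eq_on_rectangles[where T="\<lambda>\<omega>. (Z \<omega>, t i \<omega>)"])
    show "integrable M (\<lambda>\<omega>. indicator B0 (Z \<omega>) * indicator A0 (t j \<omega>) :: real)"
      by (intro P.integrable_const_bound[where B=1]) (auto simp: indicator_def)
    show "AE \<omega> in M. 0 \<le> indicator B0 (Z \<omega>) * q \<omega>" using q_bound by eventually_elim simp
    show "(\<integral>\<omega>. indicator B0 (Z \<omega>) * indicator A0 (t j \<omega>) * indicator (B \<times> A) (Z \<omega>, t i \<omega>) \<partial>M)
        = (\<integral>\<omega>. indicator B0 (Z \<omega>) * q \<omega> * indicator (B \<times> A) (Z \<omega>, t i \<omega>) \<partial>M)"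
      if "B \<in> sets borel" "A \<in> sets W" for B A
      unfolding q_def by (rule cond_indep_rectangle_integral[OF M sub Z t ci ij]) (use that in auto)
  qed (use weight_int g in auto)
  also have "\<dots> = (\<integral>\<omega>. (indicator B0 (Z \<omega>) * q \<omega>) * real_cond_exp M F (\<lambda>\<omega>. g (Z \<omega>, t i \<omega>)) \<omega> \<partial>M)"
  proof (rule S.real_cond_exp_intg(2)[symmetric])
    show "integrable M (\<lambda>\<omega>. indicator B0 (Z \<omega>) * q \<omega> * g (Z \<omega>, t i \<omega>))"
      using q_bound by (intro integrable_bounded_mult[where B=1] g_int) (auto simp: indicator_def abs_mult)
    show "(\<lambda>\<omega>. indicator B0 (Z \<omega>) * q \<omega>) \<in> borel_measurable F"
      by (intro borel_measurable_times q_F measurable_compose[OF Z borel_measurable_indicator]) simp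
  qed (use g in measurable)
  also have "\<dots> = 0"
    using mean0 by (subst integral_cong_AE[where g="\<lambda>_. 0"]) (auto elim: AE_mp)
  finally show ?thesis .
qed

lemma integral_mult_eq_zero_if_zero_on_rectangles:
  fixes T :: "'o \<Rightarrow> 'a::euclidean_space \<times> 'w" and f :: "'o \<Rightarrow> real" and h :: "'a \<times> 'w \<Rightarrow> real"
  assumes T[measurable]: "T \<in> measurable M (borel \<Otimes>\<^sub>M W)" and f: "integrable M f"
    and h[measurable]: "h \<in> borel_measurable (borel \<Otimes>\<^sub>M W)"
    and fh: "integrable M (\<lambda>\<omega>. f \<omega> * h (T \<omega>))"
    and rect: "\<And>B A. B \<in> sets borel \<Longrightarrow> A \<in> sets W \<Longrightarrow> (\<integral>\<omega>. f \<omega> * indicator (B \<times> A) (T \<omega>) \<partial>M) = 0"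
  shows "(\<integral>\<omega>. f \<omega> * h (T \<omega>) \<partial>M) = 0"
proof -
  define f_pos where "f_pos \<omega> = max 0 (f \<omega>)" for \<omega>
  define f_neg where "f_neg \<omega> = max 0 (- f \<omega>)" for \<omega>
  have f_split: "f \<omega> * c = f_pos \<omega> * c - f_neg \<omega> * c" for \<omega> c
    unfolding f_pos_def f_neg_def left_diff_distrib[symmetric] by (simp add: max_def)
  have [measurable]: "f \<in> borel_measurable M" using f by auto
  have parts_int: "integrable M f_pos" "integrable M f_neg"
    using f unfolding f_pos_def f_neg_def by auto
  have parts_h_int: "integrable M (\<lambda>\<omega>. p \<omega> * h (T \<omega>))"
    if "p \<in> {f_pos, f_neg}" for p
  proof (rule Bochner_Integration.integrable_bound[OF fh])
    show "(\<lambda>\<omega>. p \<omega> * h (T \<omega>)) \<in> borel_measurable M"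
      using that unfolding f_pos_def f_neg_def by auto
    show "AE \<omega> in M. norm (p \<omega> * h (T \<omega>)) \<le> norm (f \<omega> * h (T \<omega>))"
      using that by (auto simp: f_pos_def f_neg_def abs_mult intro!: mult_right_mono)
  qed
  have "(\<integral>\<omega>. f_pos \<omega> * h (T \<omega>) \<partial>M) = (\<integral>\<omega>. f_neg \<omega> * h (T \<omega>) \<partial>M)"
  proof (rule integral_weighted_eq_if_eq_on_rectangles[OF T parts_int(1) _ parts_int(2) _ _ h])
    fix B :: "'a set" and A assume BA: "B \<in> sets borel" "A \<in> sets W"
    have int: "integrable M (\<lambda>\<omega>. p \<omega> * indicator (B \<times> A) (T \<omega>))" if "integrable M p" for p :: "'o \<Rightarrow> real"
      using integrable_bounded_mult[OF that, of "\<lambda>\<omega>. indicator (B \<times> A) (T \<omega>)" 1] BA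
      by (simp add: mult.commute)
    show "(\<integral>\<omega>. f_pos \<omega> * indicator (B \<times> A) (T \<omega>) \<partial>M) = (\<integral>\<omega>. f_neg \<omega> * indicator (B \<times> A) (T \<omega>) \<partial>M)"
      using rect[OF BA] int[OF parts_int(1)] int[OF parts_int(2)] unfolding f_split
      by (simp add: Bochner_Integration.integral_diff)
  qed (simp_all add: f_pos_def f_neg_def)
  then show ?thesis
    using parts_h_int unfolding f_split by (simp add: Bochner_Integration.integral_diff)
qed

lemma cond_indep_integral_cross_zero:
  fixes Z :: "'o \<Rightarrow> 'a::euclidean_space" and t :: "'i \<Rightarrow> 'o \<Rightarrow> 'w" and g h :: "'a \<times> 'w \<Rightarrow> real"
  assumes M: "prob_space M" and sub: "subalgebra M F" and Z: "Z \<in> borel_measurable F"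
    and t: "t i \<in> measurable M W" "t j \<in> measurable M W"
    and ci: "cond_indep M F W I t" and ij: "i \<in> I" "j \<in> I" "i \<noteq> j"
    and g: "g \<in> borel_measurable (borel \<Otimes>\<^sub>M W)" and h: "h \<in> borel_measurable (borel \<Otimes>\<^sub>M W)"
    and g_sq: "integrable M (\<lambda>\<omega>. (g (Z \<omega>, t i \<omega>))\<^sup>2)"
    and h_sq: "integrable M (\<lambda>\<omega>. (h (Z \<omega>, t j \<omega>))\<^sup>2)"
    and mean0: "AE \<omega> in M. real_cond_exp M F (\<lambda>\<omega>. g (Z \<omega>, t i \<omega>)) \<omega> = 0"
  shows "(\<integral>\<omega>. g (Z \<omega>, t i \<omega>) * h (Z \<omega>, t j \<omega>) \<partial>M) = 0"
proof (rule integral_mult_eq_zero_if_zero_on_rectangles[where T="\<lambda>\<omega>. (Z \<omega>, t j \<omega>)", OF _ _ h])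
  interpret P: prob_space M by fact
  have [measurable]: "t i \<in> measurable M W" "t j \<in> measurable M W" "Z \<in> borel_measurable M"
    "g \<in> borel_measurable (borel \<Otimes>\<^sub>M W)" "h \<in> borel_measurable (borel \<Otimes>\<^sub>M W)"
    using t measurable_from_subalg[OF sub Z] g h by auto
  show "(\<lambda>\<omega>. (Z \<omega>, t j \<omega>)) \<in> measurable M (borel \<Otimes>\<^sub>M W)" by measurable
  have "(\<lambda>\<omega>. g (Z \<omega>, t i \<omega>)) \<in> borel_measurable M" by measurable
  then show g_int: "integrable M (\<lambda>\<omega>. g (Z \<omega>, t i \<omega>))"
    using P.square_integrable_imp_integrable g_sq by blast
  show "integrable M (\<lambda>\<omega>. g (Z \<omega>, t i \<omega>) * h (Z \<omega>, t j \<omega>))"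
    using g_sq h_sq by (intro integrable_mult_square_integrable) simp_all
  fix B :: "'a set" and A assume "B \<in> sets borel" "A \<in> sets W"
  then have "(\<integral>\<omega>. indicator B (Z \<omega>) * indicator A (t j \<omega>) * g (Z \<omega>, t i \<omega>) \<partial>M) = 0"
    by (intro cond_indep_integral_rectangle_zero[OF M sub Z t ci ij g g_int mean0])
  then show "(\<integral>\<omega>. g (Z \<omega>, t i \<omega>) * indicator (B \<times> A) (Z \<omega>, t j \<omega>) \<partial>M) = 0"
    by (simp add: indicator_times ac_simps)
qed

lemma noise_cond_second_moment:
  fixes e :: "nat \<Rightarrow> 'o \<Rightarrow> 'a::euclidean_space" and Z :: "'o \<Rightarrow> 'a"
  assumes M: "prob_space M" and sub: "subalgebra M F"
    and nc: "noise_cond M F \<nu>1 \<nu>2 n e Z" and j: "j < n"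
    and Z: "Z \<in> borel_measurable M" and Z_sq: "integrable M (\<lambda>\<omega>. (norm (Z \<omega>))\<^sup>2)"
  shows "integrable M (\<lambda>\<omega>. (norm (e j \<omega>))\<^sup>2)"
    and "(\<integral>\<omega>. (norm (e j \<omega>))\<^sup>2 \<partial>M) \<le> \<nu>1\<^sup>2 * (\<integral>\<omega>. (norm (Z \<omega>))\<^sup>2 \<partial>M) + \<nu>2\<^sup>2"
proof -
  interpret P: prob_space M by fact
  interpret S: finite_measure_subalgebra M F by unfold_locales (fact sub)
  have [measurable]: "e j \<in> borel_measurable M" using nc j unfolding noise_cond_def by auto
  have bound: "AE \<omega> in M. nn_cond_exp M F (\<lambda>\<omega>. ennreal ((norm (e j \<omega>))\<^sup>2)) \<omega>
      \<le> ennreal (\<nu>1\<^sup>2 * (norm (Z \<omega>))\<^sup>2 + \<nu>2\<^sup>2)"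
    using nc j unfolding noise_cond_def by auto
  have bound_int: "integrable M (\<lambda>\<omega>. \<nu>1\<^sup>2 * (norm (Z \<omega>))\<^sup>2 + \<nu>2\<^sup>2)" using Z_sq by auto
  have "(\<integral>\<^sup>+\<omega>. ennreal ((norm (e j \<omega>))\<^sup>2) \<partial>M)
      = (\<integral>\<^sup>+\<omega>. nn_cond_exp M F (\<lambda>\<omega>. ennreal ((norm (e j \<omega>))\<^sup>2)) \<omega> \<partial>M)"
    using S.nn_cond_exp_intg[of "\<lambda>_. 1" "\<lambda>\<omega>. ennreal ((norm (e j \<omega>))\<^sup>2)"] by simp
  also have "\<dots> \<le> (\<integral>\<^sup>+\<omega>. ennreal (\<nu>1\<^sup>2 * (norm (Z \<omega>))\<^sup>2 + \<nu>2\<^sup>2) \<partial>M)"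
    by (rule nn_integral_mono_AE[OF bound])
  also have "\<dots> = ennreal (\<integral>\<omega>. \<nu>1\<^sup>2 * (norm (Z \<omega>))\<^sup>2 + \<nu>2\<^sup>2 \<partial>M)"
    by (rule nn_integral_eq_integral[OF bound_int]) auto
  finally have le: "(\<integral>\<^sup>+\<omega>. ennreal ((norm (e j \<omega>))\<^sup>2) \<partial>M)
      \<le> ennreal (\<integral>\<omega>. \<nu>1\<^sup>2 * (norm (Z \<omega>))\<^sup>2 + \<nu>2\<^sup>2 \<partial>M)" .
  show e_sq: "integrable M (\<lambda>\<omega>. (norm (e j \<omega>))\<^sup>2)"
    by (rule integrableI_nonneg) (use le in \<open>auto simp: top.not_eq_extremum intro: le_less_trans\<close>)
  have "ennreal (\<integral>\<omega>. (norm (e j \<omega>))\<^sup>2 \<partial>M) = (\<integral>\<^sup>+\<omega>. ennreal ((norm (e j \<omega>))\<^sup>2) \<partial>M)"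
    by (rule nn_integral_eq_integral[OF e_sq, symmetric]) auto
  moreover have "0 \<le> (\<integral>\<omega>. \<nu>1\<^sup>2 * (norm (Z \<omega>))\<^sup>2 + \<nu>2\<^sup>2 \<partial>M)"
    by (rule integral_nonneg_AE) auto
  ultimately have "(\<integral>\<omega>. (norm (e j \<omega>))\<^sup>2 \<partial>M) \<le> (\<integral>\<omega>. \<nu>1\<^sup>2 * (norm (Z \<omega>))\<^sup>2 + \<nu>2\<^sup>2 \<partial>M)"
    using le ennreal_le_iff by metis
  also have "\<dots> = \<nu>1\<^sup>2 * (\<integral>\<omega>. (norm (Z \<omega>))\<^sup>2 \<partial>M) + \<nu>2\<^sup>2"
    using Z_sq by (simp add: P.prob_space)
  finally show "(\<integral>\<omega>. (norm (e j \<omega>))\<^sup>2 \<partial>M) \<le> \<nu>1\<^sup>2 * (\<integral>\<omega>. (norm (Z \<omega>))\<^sup>2 \<partial>M) + \<nu>2\<^sup>2" .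
qed

lemma integral_inner_cond_mean_zero:
  fixes e Y :: "'o \<Rightarrow> 'a::euclidean_space"
  assumes M: "prob_space M" and sub: "subalgebra M F"
    and e: "e \<in> borel_measurable M" "integrable M (\<lambda>\<omega>. (norm (e \<omega>))\<^sup>2)"
    and Y: "Y \<in> borel_measurable F" "integrable M (\<lambda>\<omega>. (norm (Y \<omega>))\<^sup>2)"
    and mean0: "\<And>b. b \<in> Basis \<Longrightarrow> AE \<omega> in M. real_cond_exp M F (\<lambda>\<omega>. e \<omega> \<bullet> b) \<omega> = 0"
  shows "(\<integral>\<omega>. e \<omega> \<bullet> Y \<omega> \<partial>M) = 0"
proof -
  interpret P: prob_space M by fact
  interpret S: finite_measure_subalgebra M F by unfold_locales (fact sub)
  have [measurable]: "e \<in> borel_measurable M" "Y \<in> borel_measurable M"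
    using e(1) measurable_from_subalg[OF sub Y(1)] by auto
  have comp_int: "integrable M (\<lambda>\<omega>. (Y \<omega> \<bullet> b) * (e \<omega> \<bullet> b))" for b
    using e Y(2) integrable_inner_const_squared[of Y M b] integrable_inner_const_squared[of e M b]
    by (intro integrable_mult_square_integrable) auto
  have "e \<omega> \<bullet> Y \<omega> = (\<Sum>b\<in>Basis. (Y \<omega> \<bullet> b) * (e \<omega> \<bullet> b))" for \<omega>
    by (subst euclidean_inner) (simp add: mult.commute)
  then have "(\<integral>\<omega>. e \<omega> \<bullet> Y \<omega> \<partial>M) = (\<integral>\<omega>. (\<Sum>b\<in>Basis. (Y \<omega> \<bullet> b) * (e \<omega> \<bullet> b)) \<partial>M)"
    by simp
  also have "\<dots> = (\<Sum>b\<in>Basis. (\<integral>\<omega>. (Y \<omega> \<bullet> b) * (e \<omega> \<bullet> b) \<partial>M))"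
    using comp_int by (rule Bochner_Integration.integral_sum)
  also have "\<dots> = (\<Sum>b\<in>Basis. (\<integral>\<omega>. (Y \<omega> \<bullet> b) * real_cond_exp M F (\<lambda>\<omega>. e \<omega> \<bullet> b) \<omega> \<partial>M))"
    using comp_int Y(1) by (intro sum.cong refl S.real_cond_exp_intg(2)[symmetric]) auto
  also have "\<dots> = 0"
  proof (intro sum.neutral ballI)
    fix b :: 'a assume "b \<in> Basis"
    from mean0[OF this] have "AE \<omega> in M. (Y \<omega> \<bullet> b) * real_cond_exp M F (\<lambda>\<omega>. e \<omega> \<bullet> b) \<omega> = 0"
      by eventually_elim simp
    then show "(\<integral>\<omega>. (Y \<omega> \<bullet> b) * real_cond_exp M F (\<lambda>\<omega>. e \<omega> \<bullet> b) \<omega> \<partial>M) = 0"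
      by (simp add: integral_eq_zero_AE)
  qed
  finally show ?thesis .
qed

lemma noise_cond_batch_inner_zero:
  fixes e :: "nat \<Rightarrow> 'o \<Rightarrow> 'a::euclidean_space" and Z Y :: "'o \<Rightarrow> 'a"
  assumes M: "prob_space M" and sub: "subalgebra M F" and nc: "noise_cond M F \<nu>1 \<nu>2 n e Z"
    and Z: "Z \<in> borel_measurable M" "integrable M (\<lambda>\<omega>. (norm (Z \<omega>))\<^sup>2)"
    and Y: "Y \<in> borel_measurable F" "integrable M (\<lambda>\<omega>. (norm (Y \<omega>))\<^sup>2)"
  shows "integrable M (\<lambda>\<omega>. ((1 / real n) *\<^sub>R (\<Sum>j<n. e j \<omega>)) \<bullet> Y \<omega>)"
    and "(\<integral>\<omega>. ((1 / real n) *\<^sub>R (\<Sum>j<n. e j \<omega>)) \<bullet> Y \<omega> \<partial>M) = 0"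
proof -
  have Y_M: "Y \<in> borel_measurable M" by (rule measurable_from_subalg[OF sub Y(1)])
  have e_M: "e j \<in> borel_measurable M" if "j < n" for j
    using nc that unfolding noise_cond_def by auto
  have e_sq: "integrable M (\<lambda>\<omega>. (norm (e j \<omega>))\<^sup>2)" if "j < n" for j
    by (rule noise_cond_second_moment(1)[OF M sub nc that Z])
  have term_int: "integrable M (\<lambda>\<omega>. e j \<omega> \<bullet> Y \<omega>)" if "j < n" for j
    by (rule integrable_inner_square_integrable[OF e_M[OF that] Y_M e_sq[OF that] Y(2)])
  have term_zero: "(\<integral>\<omega>. e j \<omega> \<bullet> Y \<omega> \<partial>M) = 0" if "j < n" for j
    using nc that unfolding noise_cond_def
    by (intro integral_inner_cond_mean_zero[OF M sub e_M[OF that] e_sq[OF that] Y]) auto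
  have avg: "((1 / real n) *\<^sub>R (\<Sum>j<n. e j \<omega>)) \<bullet> Y \<omega> = (\<Sum>j<n. e j \<omega> \<bullet> Y \<omega>) / real n" for \<omega>
    by (simp add: inner_sum_left)
  show "integrable M (\<lambda>\<omega>. ((1 / real n) *\<^sub>R (\<Sum>j<n. e j \<omega>)) \<bullet> Y \<omega>)"
    unfolding avg using term_int by (intro integrable_divide_zero Bochner_Integration.integrable_sum) auto
  show "(\<integral>\<omega>. ((1 / real n) *\<^sub>R (\<Sum>j<n. e j \<omega>)) \<bullet> Y \<omega> \<partial>M) = 0"
    unfolding avg using term_int term_zero by (simp add: Bochner_Integration.integral_sum)
qed

lemma noise_cond_integral_inner_cross_zero:
  fixes Z :: "'o \<Rightarrow> 'a::euclidean_space" and t :: "nat \<Rightarrow> 'o \<Rightarrow> 'w" and g :: "'a \<times> 'w \<Rightarrow> 'a"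
  assumes M: "prob_space M" and sub: "subalgebra M F" and Z: "Z \<in> borel_measurable F"
    and t: "\<And>j. t j \<in> measurable M W" and ci: "cond_indep M F W {..<n} t"
    and g: "g \<in> borel_measurable (borel \<Otimes>\<^sub>M W)"
    and nc: "noise_cond M F \<nu>1 \<nu>2 n (\<lambda>j \<omega>. g (Z \<omega>, t j \<omega>)) Z"
    and Z_sq: "integrable M (\<lambda>\<omega>. (norm (Z \<omega>))\<^sup>2)"
    and ij: "i < n" "j < n" "i \<noteq> j"
  shows "(\<integral>\<omega>. g (Z \<omega>, t i \<omega>) \<bullet> g (Z \<omega>, t j \<omega>) \<partial>M) = 0"
proof -
  have Z_M[measurable]: "Z \<in> borel_measurable M" by (rule measurable_from_subalg[OF sub Z])
  have [measurable]: "t k \<in> measurable M W" "g \<in> borel_measurable (borel \<Otimes>\<^sub>M W)" for k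
    by (fact t g)+
  have comp_sq: "integrable M (\<lambda>\<omega>. (g (Z \<omega>, t k \<omega>) \<bullet> b)\<^sup>2)" if "k < n" for k b
    using noise_cond_second_moment(1)[OF M sub nc that Z_M Z_sq]
    by (intro integrable_inner_const_squared) simp_all
  have "(\<integral>\<omega>. g (Z \<omega>, t i \<omega>) \<bullet> g (Z \<omega>, t j \<omega>) \<partial>M)
      = (\<integral>\<omega>. (\<Sum>b\<in>Basis. (g (Z \<omega>, t i \<omega>) \<bullet> b) * (g (Z \<omega>, t j \<omega>) \<bullet> b)) \<partial>M)"
    by (subst euclidean_inner) (rule refl)
  also have "\<dots> = (\<Sum>b\<in>Basis. (\<integral>\<omega>. (g (Z \<omega>, t i \<omega>) \<bullet> b) * (g (Z \<omega>, t j \<omega>) \<bullet> b) \<partial>M))"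
    using comp_sq ij by (intro Bochner_Integration.integral_sum integrable_mult_square_integrable) auto
  also have "\<dots> = 0"
  proof (intro sum.neutral ballI)
    fix b :: 'a assume b: "b \<in> Basis"
    have gb: "(\<lambda>p. g p \<bullet> b) \<in> borel_measurable (borel \<Otimes>\<^sub>M W)" by measurable
    have "AE \<omega> in M. real_cond_exp M F (\<lambda>\<omega>. g (Z \<omega>, t i \<omega>) \<bullet> b) \<omega> = 0"
      using nc ij b unfolding noise_cond_def by auto
    then show "(\<integral>\<omega>. (g (Z \<omega>, t i \<omega>) \<bullet> b) * (g (Z \<omega>, t j \<omega>) \<bullet> b) \<partial>M) = 0"
      using cond_indep_integral_cross_zero[OF M sub Z t t ci _ _ ij(3) gb gb] comp_sq[OF ij(1), of b]
        comp_sq[OF ij(2), of b] ij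
      by simp
  qed
  finally show ?thesis .
qed

lemma noise_cond_batch_variance:
  fixes Z :: "'o \<Rightarrow> 'a::euclidean_space" and t :: "nat \<Rightarrow> 'o \<Rightarrow> 'w" and g :: "'a \<times> 'w \<Rightarrow> 'a"
  assumes M: "prob_space M" and sub: "subalgebra M F" and Z: "Z \<in> borel_measurable F"
    and t: "\<And>j. t j \<in> measurable M W" and ci: "cond_indep M F W {..<n} t"
    and g: "g \<in> borel_measurable (borel \<Otimes>\<^sub>M W)"
    and nc: "noise_cond M F \<nu>1 \<nu>2 n (\<lambda>j \<omega>. g (Z \<omega>, t j \<omega>)) Z"
    and Z_sq: "integrable M (\<lambda>\<omega>. (norm (Z \<omega>))\<^sup>2)"
  shows "integrable M (\<lambda>\<omega>. (norm ((1 / real n) *\<^sub>R (\<Sum>j<n. g (Z \<omega>, t j \<omega>))))\<^sup>2)"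
    and "(\<integral>\<omega>. (norm ((1 / real n) *\<^sub>R (\<Sum>j<n. g (Z \<omega>, t j \<omega>))))\<^sup>2 \<partial>M)
          \<le> (\<nu>1\<^sup>2 * (\<integral>\<omega>. (norm (Z \<omega>))\<^sup>2 \<partial>M) + \<nu>2\<^sup>2) / real n"
proof -
  define e where "e j \<omega> = g (Z \<omega>, t j \<omega>)" for j \<omega>
  define B where "B = \<nu>1\<^sup>2 * (\<integral>\<omega>. (norm (Z \<omega>))\<^sup>2 \<partial>M) + \<nu>2\<^sup>2"
  have Z_M[measurable]: "Z \<in> borel_measurable M" by (rule measurable_from_subalg[OF sub Z])
  have [measurable]: "t j \<in> measurable M W" for j by (fact t)
  have [measurable]: "g \<in> borel_measurable (borel \<Otimes>\<^sub>M W)" by (fact g)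
  have e_M[measurable]: "e j \<in> borel_measurable M" for j unfolding e_def by measurable
  have e_sq: "integrable M (\<lambda>\<omega>. (norm (e j \<omega>))\<^sup>2)" "(\<integral>\<omega>. (norm (e j \<omega>))\<^sup>2 \<partial>M) \<le> B" if "j < n" for j
    using noise_cond_second_moment[OF M sub nc that Z_M Z_sq] unfolding B_def e_def by auto
  have inner_int: "integrable M (\<lambda>\<omega>. e i \<omega> \<bullet> e j \<omega>)" if "i < n" "j < n" for i j
    using e_sq(1) that by (intro integrable_inner_square_integrable) auto
  have cross: "(\<integral>\<omega>. e i \<omega> \<bullet> e j \<omega> \<partial>M) = 0" if "i < n" "j < n" "i \<noteq> j" for i j
    unfolding e_def by (rule noise_cond_integral_inner_cross_zero[OF M sub Z t ci g nc Z_sq that])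
  have norm_sq: "(norm ((1 / real n) *\<^sub>R (\<Sum>j<n. g (Z \<omega>, t j \<omega>))))\<^sup>2
      = (1 / real n)\<^sup>2 * (\<Sum>i<n. \<Sum>j<n. e i \<omega> \<bullet> e j \<omega>)" for \<omega>
  proof -
    have "(norm (\<Sum>j<n. e j \<omega>))\<^sup>2 = (\<Sum>i<n. \<Sum>j<n. e i \<omega> \<bullet> e j \<omega>)"
      unfolding power2_norm_eq_inner inner_sum_left inner_sum_right by (rule sum.swap)
    then show ?thesis
      unfolding norm_scaleR power_mult_distrib power2_abs e_def by simp
  qed
  have sum_int: "integrable M (\<lambda>\<omega>. \<Sum>i<n. \<Sum>j<n. e i \<omega> \<bullet> e j \<omega>)"
    using inner_int by (intro Bochner_Integration.integrable_sum) auto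
  show "integrable M (\<lambda>\<omega>. (norm ((1 / real n) *\<^sub>R (\<Sum>j<n. g (Z \<omega>, t j \<omega>))))\<^sup>2)"
    unfolding norm_sq using sum_int by simp
  have "(\<integral>\<omega>. (\<Sum>i<n. \<Sum>j<n. e i \<omega> \<bullet> e j \<omega>) \<partial>M) = (\<Sum>i<n. \<Sum>j<n. (\<integral>\<omega>. e i \<omega> \<bullet> e j \<omega> \<partial>M))"
    using inner_int
    by (subst Bochner_Integration.integral_sum, fastforce intro: Bochner_Integration.integrable_sum)
      (intro sum.cong refl Bochner_Integration.integral_sum, auto)
  also have "\<dots> = (\<Sum>i<n. (\<integral>\<omega>. (norm (e i \<omega>))\<^sup>2 \<partial>M))"
  proof (rule sum.cong[OF refl])
    fix i assume "i \<in> {..<n}"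
    then have "(\<Sum>j<n. (\<integral>\<omega>. e i \<omega> \<bullet> e j \<omega> \<partial>M)) = (\<Sum>j<n. if j = i then (\<integral>\<omega>. (norm (e i \<omega>))\<^sup>2 \<partial>M) else 0)"
      by (intro sum.cong refl) (auto simp: cross power2_norm_eq_inner)
    also have "\<dots> = (\<integral>\<omega>. (norm (e i \<omega>))\<^sup>2 \<partial>M)" using \<open>i \<in> {..<n}\<close> by simp
    finally show "(\<Sum>j<n. (\<integral>\<omega>. e i \<omega> \<bullet> e j \<omega> \<partial>M)) = (\<integral>\<omega>. (norm (e i \<omega>))\<^sup>2 \<partial>M)" .
  qed
  also have "\<dots> \<le> real n * B" using sum_mono[of "{..<n}" _ "\<lambda>_. B"] e_sq(2) by simp
  finally have "(\<integral>\<omega>. (\<Sum>i<n. \<Sum>j<n. e i \<omega> \<bullet> e j \<omega>) \<partial>M) \<le> real n * B" .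
  then have "(1 / real n)\<^sup>2 * (\<integral>\<omega>. (\<Sum>i<n. \<Sum>j<n. e i \<omega> \<bullet> e j \<omega>) \<partial>M) \<le> B / real n"
    by (cases "n = 0") (auto simp: power2_eq_square field_simps)
  then show "(\<integral>\<omega>. (norm ((1 / real n) *\<^sub>R (\<Sum>j<n. g (Z \<omega>, t j \<omega>))))\<^sup>2 \<partial>M)
      \<le> (\<nu>1\<^sup>2 * (\<integral>\<omega>. (norm (Z \<omega>))\<^sup>2 \<partial>M) + \<nu>2\<^sup>2) / real n"
    unfolding norm_sq B_def by simp
qed

section \<open>Histories and the gap function\<close>

lemma space_gen_sigma: "space (gen_sigma M W S) = space M"
  unfolding gen_sigma_def by (rule space_measure_of) auto

lemma sets_gen_sigma:
  "sets (gen_sigma M W S) = sigma_sets (space M) {f -` B \<inter> space M | f B. f \<in> S \<and> B \<in> sets W}"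
  unfolding gen_sigma_def by (rule sets_measure_of) auto

lemma subalgebra_gen_sigma:
  assumes "\<And>f. f \<in> S \<Longrightarrow> f \<in> measurable M W"
  shows "subalgebra M (gen_sigma M W S)"
  unfolding subalgebra_def space_gen_sigma sets_gen_sigma
  by (auto intro!: sets.sigma_sets_subset dest: assms intro: measurable_sets)

lemma measurable_gen_sigma:
  assumes "f \<in> S" "f \<in> measurable M W"
  shows "f \<in> measurable (gen_sigma M W S) W"
proof (rule measurableI)
  show "f x \<in> space W" if "x \<in> space (gen_sigma M W S)" for x
    using that assms(2) by (auto simp: space_gen_sigma measurable_space)
  show "f -` B \<inter> space (gen_sigma M W S) \<in> sets (gen_sigma M W S)" if "B \<in> sets W" for B
    unfolding sets_gen_sigma space_gen_sigma using that assms(1) by (blast intro: sigma_sets.Basic)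
qed

lemma subalgebra_gen_sigma_mono:
  assumes "S \<subseteq> S'"
  shows "subalgebra (gen_sigma M W S') (gen_sigma M W S)"
  unfolding subalgebra_def space_gen_sigma sets_gen_sigma
  using assms by (intro conjI refl sigma_sets_mono') blast+

lemma gap_le: "X \<noteq> {} \<Longrightarrow> (\<And>y. y \<in> X \<Longrightarrow> F y \<bullet> (z - y) \<le> c) \<Longrightarrow> gap X F z \<le> c"
  unfolding gap_def by (rule cSUP_least)

context
  fixes X :: "'a::euclidean_space set" and F :: "'a \<Rightarrow> 'a" and B R :: real
  assumes F_bounded: "\<And>y. y \<in> X \<Longrightarrow> norm (F y) \<le> B" and X_bounded: "\<And>y. y \<in> X \<Longrightarrow> norm y \<le> R"
begin

lemma gap_term_le: "y \<in> X \<Longrightarrow> F y \<bullet> (z - y) \<le> B * (norm z + R)"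
  using Cauchy_Schwarz_ineq2[of "F y" "z - y"] norm_triangle_ineq4[of z y]
    F_bounded[of y] X_bounded[of y]
  by (smt (verit) mult_mono norm_ge_zero)

lemma gap_ge: "y \<in> X \<Longrightarrow> F y \<bullet> (z - y) \<le> gap X F z"
  unfolding gap_def using gap_term_le by (intro cSUP_upper bdd_aboveI2) auto

lemma abs_gap_le:
  assumes "X \<noteq> {}"
  shows "\<bar>gap X F z\<bar> \<le> B * (norm z + R)"
proof -
  obtain p where p: "p \<in> X" using assms by auto
  have "- (B * (norm z + R)) \<le> F p \<bullet> (z - p)"
    using Cauchy_Schwarz_ineq2[of "F p" "z - p"] norm_triangle_ineq4[of z p] F_bounded[OF p] X_bounded[OF p]
    by (smt (verit) mult_mono norm_ge_zero)
  then show ?thesis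
    using gap_ge[OF p, of z] gap_le[OF assms gap_term_le, of z] by linarith
qed

lemma lipschitz_on_gap:
  assumes "X \<noteq> {}"
  shows "B-lipschitz_on UNIV (gap X F)"
proof (rule lipschitz_onI)
  have gap_shift: "gap X F z \<le> gap X F z' + B * norm (z - z')" for z z'
  proof (rule gap_le[OF assms])
    fix y assume y: "y \<in> X"
    have "F y \<bullet> (z - y) = F y \<bullet> (z' - y) + F y \<bullet> (z - z')" by (simp add: inner_diff_right)
    also have "\<dots> \<le> gap X F z' + B * norm (z - z')"
      using gap_ge[OF y, of z'] Cauchy_Schwarz_ineq2[of "F y" "z - z'"] F_bounded[OF y]
      by (smt (verit) mult_right_mono norm_ge_zero)
    finally show "F y \<bullet> (z - y) \<le> gap X F z' + B * norm (z - z')" .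
  qed
  show "dist (gap X F z) (gap X F z') \<le> B * dist z z'" for z z'
    using gap_shift[of z z'] gap_shift[of z' z] by (simp add: dist_norm abs_le_iff norm_minus_commute)
  obtain p where "p \<in> X" using assms by auto
  then show "B \<ge> 0" using F_bounded norm_ge_zero order.trans by blast
qed

end

section \<open>Oracle complexity\<close>

lemma sum_floor_powr_le:
  assumes a: "a \<ge> 0" and N: "\<And>k. N k = max 1 (nat \<lfloor>real k powr a\<rfloor>)"
  shows "real (\<Sum>k=1..K. N k) \<le> real K powr (a + 1)"
proof -
  have "real (N k) \<le> real K powr a" if "k \<in> {1..K}" for k
  proof -
    have "real (nat \<lfloor>real k powr a\<rfloor>) \<le> real k powr a" by (simp add: of_nat_nat)
    also have "\<dots> \<le> real K powr a" using that a by (intro powr_mono2) auto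
    finally have "real (nat \<lfloor>real k powr a\<rfloor>) \<le> real K powr a" .
    moreover have "1 \<le> real K powr a" using that a by (intro ge_one_powr_ge_zero) auto
    ultimately show ?thesis by (simp add: N max_def)
  qed
  then have "real (\<Sum>k=1..K. N k) \<le> real K * real K powr a"
    using sum_mono[of "{1..K}" "\<lambda>k. real (N k)" "\<lambda>_. real K powr a"] by simp
  also have "\<dots> = real K powr (a + 1)" by (cases "K = 0") (simp_all add: powr_add)
  finally show ?thesis .
qed

lemma oracle_complexity:
  fixes E :: "nat \<Rightarrow> real" and N :: "nat \<Rightarrow> nat"
  assumes E: "\<And>K. K \<ge> 1 \<Longrightarrow> E K \<le> c / real K" and a: "a \<ge> 0"
    and N: "\<And>k. N k = max 1 (nat \<lfloor>real k powr a\<rfloor>)"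
  shows "\<exists>\<epsilon>0>0. \<exists>c'. \<forall>\<epsilon>. 0 < \<epsilon> \<and> \<epsilon> \<le> \<epsilon>0 \<longrightarrow>
           (\<exists>K\<ge>1. E K \<le> \<epsilon> \<and> real (\<Sum>k=1..K. N k) \<le> c' / \<epsilon> powr (a + 1))"
proof -
  define C where "C = max c 1"
  have "C \<ge> 1" by (simp add: C_def)
  have "\<exists>K\<ge>1. E K \<le> \<epsilon> \<and> real (\<Sum>k=1..K. N k) \<le> (2 * C) powr (a + 1) / \<epsilon> powr (a + 1)"
    if \<epsilon>: "0 < \<epsilon> \<and> \<epsilon> \<le> 1" for \<epsilon> :: real
  proof -
    from \<open>C \<ge> 1\<close> have C_\<epsilon>: "C / \<epsilon> \<ge> 1" using \<epsilon> by (simp add: field_simps)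
    define K where "K = nat \<lceil>C / \<epsilon>\<rceil>"
    have K: "C / \<epsilon> \<le> real K" "real K \<le> 2 * C / \<epsilon>" using C_\<epsilon> unfolding K_def by linarith+
    then have "K \<ge> 1" using C_\<epsilon> by linarith
    have "E K \<le> C / real K"
      using E[OF \<open>K \<ge> 1\<close>] by (simp add: C_def divide_right_mono order_trans)
    also have "\<dots> \<le> \<epsilon>" using K(1) \<epsilon> \<open>K \<ge> 1\<close> by (simp add: pos_divide_le_eq field_simps)
    finally have "E K \<le> \<epsilon>" .
    moreover have "real (\<Sum>k=1..K. N k) \<le> (2 * C) powr (a + 1) / \<epsilon> powr (a + 1)"
    proof -
      have "real (\<Sum>k=1..K. N k) \<le> real K powr (a + 1)" by (rule sum_floor_powr_le[OF a N])
      also have "\<dots> \<le> (2 * C / \<epsilon>) powr (a + 1)" using K(2) a by (intro powr_mono2) auto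
      also have "\<dots> = (2 * C) powr (a + 1) / \<epsilon> powr (a + 1)"
        using \<epsilon> \<open>C \<ge> 1\<close> by (simp add: powr_divide)
      finally show ?thesis .
    qed
    ultimately show ?thesis
      using \<open>K \<ge> 1\<close> by blast
  qed
  then show ?thesis using zero_less_one by blast
qed

section \<open>The scheme (v-SSE)\<close>

lemma scaleR_mean_diff:
  fixes f :: "nat \<Rightarrow> 'a::real_vector"
  assumes "n \<ge> 1"
  shows "(1 / real n) *\<^sub>R (\<Sum>j<n. f j - c) = (1 / real n) *\<^sub>R (\<Sum>j<n. f j) - c"
proof -
  have "(\<Sum>j<n. f j - c) = (\<Sum>j<n. f j) - real n *\<^sub>R c"
    by (simp add: sum_subtractf sum_constant_scaleR)
  then show ?thesis using assms by (simp add: scaleR_diff_right)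
qed

locale vsse =
  fixes X :: "'a::euclidean_space set"
    and F :: "'a \<Rightarrow> 'a"
    and Fs :: "'a \<Rightarrow> 'w \<Rightarrow> 'a"
    and P :: "'w measure"
    and M :: "'o measure"
    and s sh :: "nat \<Rightarrow> nat \<Rightarrow> 'o \<Rightarrow> 'w"
    and N :: "nat \<Rightarrow> nat"
    and x xh :: "nat \<Rightarrow> 'o \<Rightarrow> 'a"
    and x0 :: 'a
    and L \<gamma> \<nu>1 \<nu>2 :: real
  assumes X_ne: "X \<noteq> {}" and X_closed: "closed X" and X_convex: "convex X"
    and X_diam: "\<exists>D>0. \<forall>u\<in>X. \<forall>v\<in>X. (norm (u - v))\<^sup>2 \<le> D\<^sup>2"
    and Fs_meas: "(\<lambda>(z, w). Fs z w) \<in> borel_measurable (borel \<Otimes>\<^sub>M P)"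
    and A1_lip: "L-lipschitz_on UNIV F" and A1_mono: "monotone_map F"
    and M_prob: "prob_space M"
    and s_meas: "\<And>j k. s j k \<in> measurable M P" and sh_meas: "\<And>j k. sh j k \<in> measurable M P"
    and A4_k: "\<And>k. noise_cond M (hist M P N s sh k) \<nu>1 \<nu>2 (N k)
                  (\<lambda>j \<omega>. Fs (x k \<omega>) (s j k \<omega>) - F (x k \<omega>)) (x k)"
    and A4_half: "\<And>k. noise_cond M (hist_half M P N s sh k) \<nu>1 \<nu>2 (N k)
                  (\<lambda>j \<omega>. Fs (xh k \<omega>) (sh j k \<omega>) - F (xh k \<omega>)) (xh k)"
    and A4_indep_k: "\<And>k. cond_indep M (hist M P N s sh k) P {..<N k} (\<lambda>j. s j k)"
    and A4_indep_half: "\<And>k. cond_indep M (hist_half M P N s sh k) P {..<N k} (\<lambda>j. sh j k)"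
    and N_pos: "\<And>k. N k \<ge> 1" and N_mono: "mono N"
    and N_sum: "\<exists>Mb. \<forall>K. (\<Sum>k=1..K. 1 / real (N k)) < Mb"
    and gamma_pos: "\<gamma> > 0"
    and gamma_le: "\<gamma> * (sqrt 2 * sqrt (L\<^sup>2 + 4 * \<nu>1\<^sup>2 / real (N 0))) \<le> 1"
    and x_init: "\<And>\<omega>. \<omega> \<in> space M \<Longrightarrow> x 0 \<omega> = x0"
    and xh_step: "\<And>k \<omega>. \<omega> \<in> space M \<Longrightarrow>
        xh k \<omega> = closest_point X
          (x k \<omega> - \<gamma> *\<^sub>R ((1 / real (N k)) *\<^sub>R (\<Sum>j<N k. Fs (x k \<omega>) (s j k \<omega>))))"
    and x_step: "\<And>k \<omega>. \<omega> \<in> space M \<Longrightarrow>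
        x (Suc k) \<omega> = closest_point
          {y. (x k \<omega> - \<gamma> *\<^sub>R ((1 / real (N k)) *\<^sub>R (\<Sum>j<N k. Fs (x k \<omega>) (s j k \<omega>))) - xh k \<omega>)
                \<bullet> (y - xh k \<omega>) \<le> 0}
          (x k \<omega> - \<gamma> *\<^sub>R ((1 / real (N k)) *\<^sub>R (\<Sum>j<N k. Fs (xh k \<omega>) (sh j k \<omega>))))"
begin

sublocale P: prob_space M by (rule M_prob)

abbreviation "Hist k \<equiv> hist M P N s sh k"
abbreviation "Hist_half k \<equiv> hist_half M P N s sh k"

definition "Fbar k \<omega> = (1 / real (N k)) *\<^sub>R (\<Sum>j<N k. Fs (x k \<omega>) (s j k \<omega>))"
definition "Fbar_half k \<omega> = (1 / real (N k)) *\<^sub>R (\<Sum>j<N k. Fs (xh k \<omega>) (sh j k \<omega>))"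
definition "noise k \<omega> = Fbar k \<omega> - F (x k \<omega>)"
definition "noise_half k \<omega> = Fbar_half k \<omega> - F (xh k \<omega>)"
definition "C k \<omega> = {y. (x k \<omega> - \<gamma> *\<^sub>R Fbar k \<omega> - xh k \<omega>) \<bullet> (y - xh k \<omega>) \<le> 0}"
definition "x_tilde k \<omega> = closest_point (C k \<omega>) (x k \<omega> - \<gamma> *\<^sub>R F (xh k \<omega>))"

text \<open>A ghost sequence, not computed by the method: driven by the noise at x_{k+1/2}, it is
  adapted to the history, so the noise term it produces in the one-step inequality has mean zero
  although the gap takes a supremum over the comparison point.\<close>
primrec u :: "nat \<Rightarrow> 'o \<Rightarrow> 'a" where
  "u 0 = (\<lambda>\<omega>. closest_point X x0)"
| "u (Suc k) = (\<lambda>\<omega>. closest_point X (u k \<omega> + \<gamma> *\<^sub>R noise_half k \<omega>))"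

lemma xh_eq: "\<omega> \<in> space M \<Longrightarrow> xh k \<omega> = closest_point X (x k \<omega> - \<gamma> *\<^sub>R Fbar k \<omega>)"
  using xh_step unfolding Fbar_def by simp

lemma x_Suc_eq: "\<omega> \<in> space M \<Longrightarrow> x (Suc k) \<omega> = closest_point (C k \<omega>) (x k \<omega> - \<gamma> *\<^sub>R Fbar_half k \<omega>)"
  using x_step unfolding Fbar_def Fbar_half_def C_def by simp

lemma xh_in_X: "\<omega> \<in> space M \<Longrightarrow> xh k \<omega> \<in> X"
  using xh_eq closest_point_in_set[OF X_closed X_ne] by simp

lemma u_in_X: "u k \<omega> \<in> X"
  by (cases k) (simp_all add: closest_point_in_set[OF X_closed X_ne])

lemma convex_C: "convex (C k \<omega>)"
  unfolding C_def by (simp add: inner_diff_right convex_halfspace_le)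

lemma closed_C: "closed (C k \<omega>)"
  unfolding C_def by (simp add: inner_diff_right closed_halfspace_le)

lemma X_subset_C: "\<omega> \<in> space M \<Longrightarrow> X \<subseteq> C k \<omega>"
  unfolding C_def using closest_point_dot[OF X_convex X_closed] by (auto simp: xh_eq)

definition "samples k = {s j i | j i. i < k \<and> j < N i} \<union> {sh j i | j i. i < k \<and> j < N i}"

lemma hist_eq: "Hist k = gen_sigma M P (samples k)"
  unfolding hist_def samples_def ..

lemma hist_half_eq: "Hist_half k = gen_sigma M P (samples k \<union> {s j k | j. j < N k})"
  unfolding hist_half_def samples_def ..

lemma subalgebra_hist: "subalgebra M (Hist k)"
  unfolding hist_eq samples_def by (rule subalgebra_gen_sigma) (auto intro: s_meas sh_meas)

lemma subalgebra_hist_half: "subalgebra M (Hist_half k)"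
  unfolding hist_half_eq samples_def by (rule subalgebra_gen_sigma) (auto intro: s_meas sh_meas)

lemma subalgebra_hist_hist_half: "subalgebra (Hist_half k) (Hist k)"
  unfolding hist_eq hist_half_eq by (rule subalgebra_gen_sigma_mono) blast

lemma subalgebra_hist_half_hist_Suc: "subalgebra (Hist (Suc k)) (Hist_half k)"
  unfolding hist_eq hist_half_eq samples_def
  by (rule subalgebra_gen_sigma_mono) (auto simp: less_Suc_eq)

lemma s_measurable_hist_half: "j < N k \<Longrightarrow> s j k \<in> measurable (Hist_half k) P"
  unfolding hist_half_eq by (rule measurable_gen_sigma[OF _ s_meas]) blast

lemma sh_measurable_hist_Suc: "j < N k \<Longrightarrow> sh j k \<in> measurable (Hist (Suc k)) P"
  unfolding hist_eq samples_def by (rule measurable_gen_sigma[OF _ sh_meas]) blast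

lemma space_hist: "space (Hist k) = space M"
  unfolding hist_eq by (rule space_gen_sigma)

lemma space_hist_half: "space (Hist_half k) = space M"
  unfolding hist_half_eq by (rule space_gen_sigma)

lemma borel_measurable_F[measurable]: "F \<in> borel_measurable borel"
  by (rule borel_measurable_continuous_onI[OF lipschitz_on_continuous_on[OF A1_lip]])

lemma borel_measurable_closest_point_X[measurable]: "closest_point X \<in> borel_measurable borel"
  by (rule borel_measurable_continuous_onI[OF continuous_on_closest_point[OF X_convex X_closed X_ne]])

lemma measurable_Fs_comp[measurable]:
  "Z \<in> borel_measurable A \<Longrightarrow> T \<in> measurable A P \<Longrightarrow> (\<lambda>\<omega>. Fs (Z \<omega>) (T \<omega>)) \<in> borel_measurable A"
  using measurable_compose[OF measurable_Pair Fs_meas] by simp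

lemma Fbar_measurable_hist_half:
  "x k \<in> borel_measurable (Hist k) \<Longrightarrow> Fbar k \<in> borel_measurable (Hist_half k)"
  unfolding Fbar_def[abs_def]
  by (intro borel_measurable_scaleR borel_measurable_const borel_measurable_sum measurable_Fs_comp
      measurable_from_subalg[OF subalgebra_hist_hist_half] s_measurable_hist_half) auto

lemma xh_measurable_hist_half:
  assumes "x k \<in> borel_measurable (Hist k)"
  shows "xh k \<in> borel_measurable (Hist_half k)"
proof -
  have [measurable]: "x k \<in> borel_measurable (Hist_half k)" "Fbar k \<in> borel_measurable (Hist_half k)"
    using measurable_from_subalg[OF subalgebra_hist_hist_half assms] Fbar_measurable_hist_half[OF assms] .
  have "(\<lambda>\<omega>. closest_point X (x k \<omega> - \<gamma> *\<^sub>R Fbar k \<omega>)) \<in> borel_measurable (Hist_half k)" by measurable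
  then show ?thesis by (rule measurable_cong[THEN iffD1, rotated]) (simp add: space_hist_half xh_eq)
qed

lemma x_u_measurable_hist: "x k \<in> borel_measurable (Hist k) \<and> u k \<in> borel_measurable (Hist k)"
proof (induction k)
  case 0
  have "x 0 \<in> borel_measurable (Hist 0) \<longleftrightarrow> (\<lambda>_. x0) \<in> borel_measurable (Hist 0)"
    by (rule measurable_cong) (simp add: space_hist x_init)
  then show ?case by simp
next
  case (Suc k)
  note to_Suc = measurable_from_subalg[OF subalgebra_hist_half_hist_Suc]
  have [measurable]: "x k \<in> borel_measurable (Hist (Suc k))" "u k \<in> borel_measurable (Hist (Suc k))"
    using Suc measurable_from_subalg[OF subalgebra_hist_hist_half] to_Suc by blast+
  have [measurable]: "Fbar k \<in> borel_measurable (Hist (Suc k))" "xh k \<in> borel_measurable (Hist (Suc k))"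
    using Suc Fbar_measurable_hist_half xh_measurable_hist_half to_Suc by blast+
  have [measurable]: "Fbar_half k \<in> borel_measurable (Hist (Suc k))"
    unfolding Fbar_half_def[abs_def]
    by (intro borel_measurable_scaleR borel_measurable_const borel_measurable_sum measurable_Fs_comp
        sh_measurable_hist_Suc) auto
  have "(\<lambda>\<omega>. closest_point (C k \<omega>) (x k \<omega> - \<gamma> *\<^sub>R Fbar_half k \<omega>)) \<in> borel_measurable (Hist (Suc k))"
    unfolding C_def by measurable
  then have "x (Suc k) \<in> borel_measurable (Hist (Suc k))"
    by (rule measurable_cong[THEN iffD1, rotated]) (simp add: space_hist x_Suc_eq)
  moreover have "u (Suc k) \<in> borel_measurable (Hist (Suc k))"
    unfolding u.simps noise_half_def by measurable
  ultimately show ?case ..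
qed

lemmas [measurable] = s_meas sh_meas

lemma x_measurable_hist_half: "x k \<in> borel_measurable (Hist_half k)"
  using measurable_from_subalg[OF subalgebra_hist_hist_half] x_u_measurable_hist by blast

lemma u_measurable_hist_half: "u k \<in> borel_measurable (Hist_half k)"
  using measurable_from_subalg[OF subalgebra_hist_hist_half] x_u_measurable_hist by blast

lemma x_tilde_measurable_hist_half: "x_tilde k \<in> borel_measurable (Hist_half k)"
proof -
  have [measurable]: "x k \<in> borel_measurable (Hist_half k)" "Fbar k \<in> borel_measurable (Hist_half k)"
    "xh k \<in> borel_measurable (Hist_half k)"
    using x_measurable_hist_half Fbar_measurable_hist_half xh_measurable_hist_half x_u_measurable_hist
    by blast+
  show ?thesis unfolding x_tilde_def[abs_def] C_def by measurable
qed

lemma x_measurable[measurable]: "x k \<in> borel_measurable M"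
  using measurable_from_subalg[OF subalgebra_hist] x_u_measurable_hist by blast

lemma u_measurable[measurable]: "u k \<in> borel_measurable M"
  using measurable_from_subalg[OF subalgebra_hist] x_u_measurable_hist by blast

lemma xh_measurable[measurable]: "xh k \<in> borel_measurable M"
  using measurable_from_subalg[OF subalgebra_hist_half] xh_measurable_hist_half x_u_measurable_hist by blast

lemma x_tilde_measurable[measurable]: "x_tilde k \<in> borel_measurable M"
  using measurable_from_subalg[OF subalgebra_hist_half x_tilde_measurable_hist_half] .

lemma noise_measurable[measurable]: "noise k \<in> borel_measurable M"
  unfolding noise_def[abs_def] Fbar_def by measurable

lemma noise_half_measurable[measurable]: "noise_half k \<in> borel_measurable M"
  unfolding noise_half_def[abs_def] Fbar_half_def by measurable

lemma noise_eq: "noise k \<omega> = (1 / real (N k)) *\<^sub>R (\<Sum>j<N k. Fs (x k \<omega>) (s j k \<omega>) - F (x k \<omega>))"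
  unfolding noise_def Fbar_def by (simp add: scaleR_mean_diff[OF N_pos])

lemma noise_half_eq:
  "noise_half k \<omega> = (1 / real (N k)) *\<^sub>R (\<Sum>j<N k. Fs (xh k \<omega>) (sh j k \<omega>) - F (xh k \<omega>))"
  unfolding noise_half_def Fbar_half_def by (simp add: scaleR_mean_diff[OF N_pos])

definition "R_X = norm (closest_point X x0) + diameter X"
definition "B_F = norm (F (closest_point X x0)) + L * diameter X"

lemma bounded_X: "bounded X"
proof -
  obtain D where D: "D > 0" "\<And>u v. u \<in> X \<Longrightarrow> v \<in> X \<Longrightarrow> (norm (u - v))\<^sup>2 \<le> D\<^sup>2"
    using X_diam by blast
  obtain p where p: "p \<in> X" using X_ne by blast
  have "dist p y \<le> D" if "y \<in> X" for y
    using power2_le_imp_le[OF D(2)[OF p that]] D(1) by (simp add: dist_norm)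
  then show ?thesis unfolding bounded_any_center[where a=p] by blast
qed

lemma closest_point_x0_in_X: "closest_point X x0 \<in> X"
  by (rule closest_point_in_set[OF X_closed X_ne])

lemma norm_le_R_X:
  assumes "y \<in> X"
  shows "norm y \<le> R_X"
  using diameter_bounded_bound[OF bounded_X assms closest_point_x0_in_X]
    norm_triangle_sub[of y "closest_point X x0"]
  unfolding R_X_def dist_norm by linarith

lemma norm_F_le_B_F: "y \<in> X \<Longrightarrow> norm (F y) \<le> B_F"
proof -
  assume y: "y \<in> X"
  let ?p = "closest_point X x0"
  have p: "?p \<in> X" by (rule closest_point_x0_in_X)
  have "norm (F y - F ?p) \<le> L * norm (y - ?p)" by (rule lipschitz_on_normD[OF A1_lip]) auto
  also have "\<dots> \<le> L * diameter X"
    using diameter_bounded_bound[OF bounded_X y p] lipschitz_on_nonneg[OF A1_lip]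
    by (intro mult_left_mono) (auto simp: dist_norm)
  finally show ?thesis unfolding B_F_def using norm_triangle_sub[of "F y" "F ?p"] by linarith
qed

lemma B_F_nonneg: "B_F \<ge> 0"
  using norm_F_le_B_F[OF closest_point_x0_in_X] norm_ge_zero order.trans by blast

lemma norm_closest_point_C_le:
  assumes "\<omega> \<in> space M"
  shows "norm (closest_point (C k \<omega>) z) \<le> 2 * R_X + norm z"
proof -
  let ?p = "closest_point X x0"
  have pC: "?p \<in> C k \<omega>" using X_subset_C[OF assms] closest_point_x0_in_X by blast
  have "norm (closest_point (C k \<omega>) z - ?p) \<le> norm (z - ?p)"
    using closest_point_lipschitz[OF convex_C closed_C, of k \<omega> z ?p] closest_point_self[OF pC] pC
    by (auto simp: dist_norm)
  then show ?thesis
    using norm_le_R_X[OF closest_point_x0_in_X] norm_triangle_ineq4[of z ?p]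
      norm_triangle_sub[of "closest_point (C k \<omega>) z" ?p]
    by linarith
qed

lemma square_integrable_xh: "integrable M (\<lambda>\<omega>. (norm (xh k \<omega>))\<^sup>2)"
  and integral_xh_squared_le: "(\<integral>\<omega>. (norm (xh k \<omega>))\<^sup>2 \<partial>M) \<le> R_X\<^sup>2"
proof -
  have le: "(norm (xh k \<omega>))\<^sup>2 \<le> R_X\<^sup>2" if "\<omega> \<in> space M" for \<omega>
    using norm_le_R_X[OF xh_in_X[OF that]] by (intro power_mono) auto
  show xh_sq: "integrable M (\<lambda>\<omega>. (norm (xh k \<omega>))\<^sup>2)"
    using le by (intro P.integrable_const_bound[where B="R_X\<^sup>2"] AE_I2) auto
  show "(\<integral>\<omega>. (norm (xh k \<omega>))\<^sup>2 \<partial>M) \<le> R_X\<^sup>2"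
    using P.integral_le_const[OF xh_sq] le by (auto intro: AE_I2)
qed

lemma square_integrable_noise_half: "integrable M (\<lambda>\<omega>. (norm (noise_half k \<omega>))\<^sup>2)"
  and integral_noise_half_squared_le:
    "(\<integral>\<omega>. (norm (noise_half k \<omega>))\<^sup>2 \<partial>M) \<le> (\<nu>1\<^sup>2 * R_X\<^sup>2 + \<nu>2\<^sup>2) / real (N k)"
proof -
  have g: "(\<lambda>(z, w). Fs z w - F z) \<in> borel_measurable (borel \<Otimes>\<^sub>M P)"
    unfolding split_beta' by measurable
  have nc: "noise_cond M (Hist_half k) \<nu>1 \<nu>2 (N k)
      (\<lambda>j \<omega>. (\<lambda>(z, w). Fs z w - F z) (xh k \<omega>, sh j k \<omega>)) (xh k)"
    using A4_half by simp
  note var = noise_cond_batch_variance[OF M_prob subalgebra_hist_half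
      xh_measurable_hist_half[OF conjunct1[OF x_u_measurable_hist]] sh_meas A4_indep_half g nc
      square_integrable_xh]
  show "integrable M (\<lambda>\<omega>. (norm (noise_half k \<omega>))\<^sup>2)"
    using var(1) by (simp add: noise_half_eq)
  have "(\<integral>\<omega>. (norm (noise_half k \<omega>))\<^sup>2 \<partial>M) \<le> (\<nu>1\<^sup>2 * (\<integral>\<omega>. (norm (xh k \<omega>))\<^sup>2 \<partial>M) + \<nu>2\<^sup>2) / real (N k)"
    using var(2) by (simp add: noise_half_eq)
  also have "\<dots> \<le> (\<nu>1\<^sup>2 * R_X\<^sup>2 + \<nu>2\<^sup>2) / real (N k)"
    using integral_xh_squared_le[of k] by (intro divide_right_mono add_right_mono mult_left_mono) auto
  finally show "(\<integral>\<omega>. (norm (noise_half k \<omega>))\<^sup>2 \<partial>M) \<le> (\<nu>1\<^sup>2 * R_X\<^sup>2 + \<nu>2\<^sup>2) / real (N k)" .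
qed

lemma square_integrable_x: "integrable M (\<lambda>\<omega>. (norm (x k \<omega>))\<^sup>2)"
proof (induction k)
  case 0
  show ?case
    by (rule P.integrable_const_bound[where B="(norm x0)\<^sup>2"]) (simp_all add: x_init)
next
  case (Suc k)
  have step: "integrable M (\<lambda>\<omega>. (norm (x k \<omega> + (- \<gamma>) *\<^sub>R noise_half k \<omega>))\<^sup>2)"
    using Suc square_integrable_noise_half[of k]
    by (intro P.square_integrable_add) (auto simp: power_mult_distrib)
  show ?case
  proof (rule P.square_integrable_norm_le[OF _ _ step])
    fix \<omega> assume \<omega>: "\<omega> \<in> space M"
    have "Fbar_half k \<omega> = noise_half k \<omega> + F (xh k \<omega>)" by (simp add: noise_half_def)
    then have "norm (x k \<omega> - \<gamma> *\<^sub>R Fbar_half k \<omega>)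
        \<le> norm (x k \<omega> + (- \<gamma>) *\<^sub>R noise_half k \<omega>) + \<gamma> * norm (F (xh k \<omega>))"
      using norm_triangle_ineq4[of "x k \<omega> + (- \<gamma>) *\<^sub>R noise_half k \<omega>" "\<gamma> *\<^sub>R F (xh k \<omega>)"] gamma_pos
      by (simp add: algebra_simps)
    also have "\<gamma> * norm (F (xh k \<omega>)) \<le> \<gamma> * B_F"
      using norm_F_le_B_F[OF xh_in_X[OF \<omega>]] gamma_pos by simp
    finally show "norm (x (Suc k) \<omega>) \<le> (2 * R_X + \<gamma> * B_F) + norm (x k \<omega> + (- \<gamma>) *\<^sub>R noise_half k \<omega>)"
      using norm_closest_point_C_le[OF \<omega>, of k "x k \<omega> - \<gamma> *\<^sub>R Fbar_half k \<omega>"]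
      by (simp add: x_Suc_eq[OF \<omega>])
  qed measurable
qed

lemma square_integrable_noise: "integrable M (\<lambda>\<omega>. (norm (noise k \<omega>))\<^sup>2)"
  and integral_noise_squared_le:
    "(\<integral>\<omega>. (norm (noise k \<omega>))\<^sup>2 \<partial>M) \<le> (\<nu>1\<^sup>2 * (\<integral>\<omega>. (norm (x k \<omega>))\<^sup>2 \<partial>M) + \<nu>2\<^sup>2) / real (N k)"
proof -
  have g: "(\<lambda>(z, w). Fs z w - F z) \<in> borel_measurable (borel \<Otimes>\<^sub>M P)"
    unfolding split_beta' by measurable
  have nc: "noise_cond M (Hist k) \<nu>1 \<nu>2 (N k) (\<lambda>j \<omega>. (\<lambda>(z, w). Fs z w - F z) (x k \<omega>, s j k \<omega>)) (x k)"
    using A4_k by simp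
  note var = noise_cond_batch_variance[OF M_prob subalgebra_hist conjunct1[OF x_u_measurable_hist]
      s_meas A4_indep_k g nc square_integrable_x]
  show "integrable M (\<lambda>\<omega>. (norm (noise k \<omega>))\<^sup>2)"
    using var(1) by (simp add: noise_eq)
  show "(\<integral>\<omega>. (norm (noise k \<omega>))\<^sup>2 \<partial>M) \<le> (\<nu>1\<^sup>2 * (\<integral>\<omega>. (norm (x k \<omega>))\<^sup>2 \<partial>M) + \<nu>2\<^sup>2) / real (N k)"
    using var(2) by (simp add: noise_eq)
qed

lemma square_integrable_diff_X:
  assumes [measurable]: "f \<in> borel_measurable M" "g \<in> borel_measurable M"
    and "integrable M (\<lambda>\<omega>. (norm (f \<omega>))\<^sup>2)" "\<And>\<omega>. \<omega> \<in> space M \<Longrightarrow> g \<omega> \<in> X"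
  shows "integrable M (\<lambda>\<omega>. (norm (f \<omega> - g \<omega>))\<^sup>2)"
proof (rule P.square_integrable_norm_le[OF _ _ assms(3)])
  fix \<omega> assume "\<omega> \<in> space M"
  then show "norm (f \<omega> - g \<omega>) \<le> R_X + norm (f \<omega>)"
    using norm_triangle_ineq4[of "f \<omega>" "g \<omega>"] norm_le_R_X[OF assms(4)] by fastforce
qed measurable

lemma square_integrable_x_tilde: "integrable M (\<lambda>\<omega>. (norm (x_tilde k \<omega>))\<^sup>2)"
proof (rule P.square_integrable_norm_le[OF _ _ square_integrable_x])
  fix \<omega> assume \<omega>: "\<omega> \<in> space M"
  have "norm (\<gamma> *\<^sub>R F (xh k \<omega>)) \<le> \<gamma> * B_F"
    using norm_F_le_B_F[OF xh_in_X[OF \<omega>]] gamma_pos by simp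
  then have "norm (x k \<omega> - \<gamma> *\<^sub>R F (xh k \<omega>)) \<le> norm (x k \<omega>) + \<gamma> * B_F"
    using norm_triangle_ineq4[of "x k \<omega>" "\<gamma> *\<^sub>R F (xh k \<omega>)"] by linarith
  then show "norm (x_tilde k \<omega>) \<le> (2 * R_X + \<gamma> * B_F) + norm (x k \<omega>)"
    using norm_closest_point_C_le[OF \<omega>, of k "x k \<omega> - \<gamma> *\<^sub>R F (xh k \<omega>)"]
    unfolding x_tilde_def by linarith
qed measurable

lemma integrable_noise_half_ghost: "integrable M (\<lambda>\<omega>. noise_half k \<omega> \<bullet> (u k \<omega> - x_tilde k \<omega>))"
  and integral_noise_half_ghost: "(\<integral>\<omega>. noise_half k \<omega> \<bullet> (u k \<omega> - x_tilde k \<omega>) \<partial>M) = 0"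
proof -
  have Y: "(\<lambda>\<omega>. u k \<omega> - x_tilde k \<omega>) \<in> borel_measurable (Hist_half k)"
    using u_measurable_hist_half x_tilde_measurable_hist_half by measurable
  have "integrable M (\<lambda>\<omega>. (norm (x_tilde k \<omega> - u k \<omega>))\<^sup>2)"
    by (rule square_integrable_diff_X[OF _ _ square_integrable_x_tilde u_in_X]) measurable
  then have Y_sq: "integrable M (\<lambda>\<omega>. (norm (u k \<omega> - x_tilde k \<omega>))\<^sup>2)"
    by (simp add: norm_minus_commute)
  note zero = noise_cond_batch_inner_zero[OF M_prob subalgebra_hist_half A4_half xh_measurable
      square_integrable_xh Y Y_sq]
  show "integrable M (\<lambda>\<omega>. noise_half k \<omega> \<bullet> (u k \<omega> - x_tilde k \<omega>))"
    using zero(1) by (simp add: noise_half_eq)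
  show "(\<integral>\<omega>. noise_half k \<omega> \<bullet> (u k \<omega> - x_tilde k \<omega>) \<partial>M) = 0"
    using zero(2) by (simp add: noise_half_eq)
qed

definition "Q k \<omega> = (2 * \<gamma>\<^sup>2 * L\<^sup>2 - 1) * (norm (x k \<omega> - xh k \<omega>))\<^sup>2 + 2 * \<gamma>\<^sup>2 * (norm (noise k \<omega>))\<^sup>2
    + 3 * \<gamma>\<^sup>2 * (norm (noise_half k \<omega>))\<^sup>2 + 2 * \<gamma> * (noise_half k \<omega> \<bullet> (u k \<omega> - x_tilde k \<omega>))"

definition "Phi k \<omega> y = (norm (x k \<omega> - y))\<^sup>2 + (norm (u k \<omega> - y))\<^sup>2"

lemma one_step_ineq:
  assumes \<omega>: "\<omega> \<in> space M" and y: "y \<in> X"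
  shows "2 * \<gamma> * (F y \<bullet> (xh k \<omega> - y)) \<le> Phi k \<omega> y - Phi (Suc k) \<omega> y + Q k \<omega>"
proof -
  have "(norm (x (Suc k) \<omega> - y))\<^sup>2 \<le> (norm (x k \<omega> - y))\<^sup>2 + (2 * \<gamma>\<^sup>2 * L\<^sup>2 - 1) * (norm (x k \<omega> - xh k \<omega>))\<^sup>2
      + 2 * \<gamma>\<^sup>2 * (norm (noise k \<omega>))\<^sup>2 + 2 * \<gamma>\<^sup>2 * (norm (noise_half k \<omega>))\<^sup>2
      - 2 * \<gamma> * (F y \<bullet> (xh k \<omega> - y)) + 2 * \<gamma> * (noise_half k \<omega> \<bullet> (y - x_tilde k \<omega>))"
    using extragradient_step_ineq[OF X_convex X_closed y A1_lip A1_mono gamma_pos xh_eq[OF \<omega>] C_def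
        x_Suc_eq[OF \<omega>] x_tilde_def]
    unfolding noise_def[symmetric] noise_half_def[symmetric] .
  moreover have "2 * \<gamma> * (noise_half k \<omega> \<bullet> (y - u k \<omega>))
      \<le> (norm (u k \<omega> - y))\<^sup>2 - (norm (u (Suc k) \<omega> - y))\<^sup>2 + \<gamma>\<^sup>2 * (norm (noise_half k \<omega>))\<^sup>2"
    using closest_point_step_ineq[OF X_convex X_closed y] by simp
  moreover have "noise_half k \<omega> \<bullet> (y - x_tilde k \<omega>)
      = noise_half k \<omega> \<bullet> (y - u k \<omega>) + noise_half k \<omega> \<bullet> (u k \<omega> - x_tilde k \<omega>)"
    by (simp add: inner_diff_right)
  ultimately show ?thesis unfolding Phi_def Q_def by (simp add: algebra_simps)
qed

lemma telescoping_ineq: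
  assumes "\<omega> \<in> space M" "y \<in> X"
  shows "2 * \<gamma> * (\<Sum>k<K. F y \<bullet> (xh k \<omega> - y)) \<le> Phi 0 \<omega> y - Phi K \<omega> y + (\<Sum>k<K. Q k \<omega>)"
proof (induction K)
  case (Suc K)
  then show ?case using one_step_ineq[OF assms, of K] by (simp add: algebra_simps)
qed simp

definition "Phi0_bound = (norm (x0 - closest_point X x0) + diameter X)\<^sup>2 + (diameter X)\<^sup>2"

lemma Phi0_le:
  assumes "\<omega> \<in> space M" "y \<in> X"
  shows "Phi 0 \<omega> y \<le> Phi0_bound"
proof -
  let ?p = "closest_point X x0"
  have d: "norm (?p - y) \<le> diameter X"
    using diameter_bounded_bound[OF bounded_X closest_point_x0_in_X assms(2)] by (simp add: dist_norm)
  then have "norm (x0 - y) \<le> norm (x0 - ?p) + diameter X"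
    using norm_triangle_ineq[of "x0 - ?p" "?p - y"] by simp
  then have "(norm (x0 - y))\<^sup>2 \<le> (norm (x0 - ?p) + diameter X)\<^sup>2" by (rule power_mono) simp
  moreover have "(norm (?p - y))\<^sup>2 \<le> (diameter X)\<^sup>2" using d by (rule power_mono) simp
  ultimately show ?thesis
    using assms(1) unfolding Phi_def Phi0_bound_def by (simp add: x_init)
qed

abbreviation "x_avg K \<omega> \<equiv> (1 / real K) *\<^sub>R (\<Sum>k<K. xh k \<omega>)"

lemma gap_x_avg_le:
  assumes \<omega>: "\<omega> \<in> space M" and K: "K \<ge> 1"
  shows "gap X F (x_avg K \<omega>) \<le> (Phi0_bound + (\<Sum>k<K. Q k \<omega>)) / (2 * \<gamma> * real K)"
proof (rule gap_le[OF X_ne])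
  fix y assume y: "y \<in> X"
  have "x_avg K \<omega> - y = (1 / real K) *\<^sub>R (\<Sum>k<K. xh k \<omega> - y)"
    using K by (simp add: sum_subtractf sum_constant_scaleR scaleR_diff_right)
  then have "F y \<bullet> (x_avg K \<omega> - y) = (\<Sum>k<K. F y \<bullet> (xh k \<omega> - y)) / real K"
    by (simp add: inner_sum_right)
  also have "\<dots> = (2 * \<gamma> * (\<Sum>k<K. F y \<bullet> (xh k \<omega> - y))) / (2 * \<gamma> * real K)"
    using gamma_pos by simp
  also have "\<dots> \<le> (Phi0_bound + (\<Sum>k<K. Q k \<omega>)) / (2 * \<gamma> * real K)"
  proof (rule divide_right_mono)
    have "Phi K \<omega> y \<ge> 0" by (simp add: Phi_def)
    then show "2 * \<gamma> * (\<Sum>k<K. F y \<bullet> (xh k \<omega> - y)) \<le> Phi0_bound + (\<Sum>k<K. Q k \<omega>)"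
      using telescoping_ineq[OF \<omega> y, of K] Phi0_le[OF \<omega> y] by linarith
  qed (use gamma_pos in simp)
  finally show "F y \<bullet> (x_avg K \<omega> - y) \<le> (Phi0_bound + (\<Sum>k<K. Q k \<omega>)) / (2 * \<gamma> * real K)" .
qed

lemma step_size_le: "2 * \<gamma>\<^sup>2 * L\<^sup>2 + 4 * \<gamma>\<^sup>2 * \<nu>1\<^sup>2 / real (N k) \<le> 1"
proof -
  define n0 where "n0 = real (N 0)"
  have n0: "n0 \<ge> 1" unfolding n0_def using N_pos[of 0] by simp
  have "real (N k) \<ge> n0" unfolding n0_def using N_mono by (simp add: mono_def)
  then have "4 * \<nu>1\<^sup>2 / real (N k) \<le> 4 * \<nu>1\<^sup>2 / n0"
    using n0 by (intro divide_left_mono) auto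
  also have "\<dots> \<le> 8 * \<nu>1\<^sup>2 / n0"
    using n0 zero_le_power2[of \<nu>1] by (intro divide_right_mono) linarith+
  finally have "2 * L\<^sup>2 + 4 * \<nu>1\<^sup>2 / real (N k) \<le> 2 * (L\<^sup>2 + 4 * \<nu>1\<^sup>2 / n0)" by simp
  moreover have "(\<gamma> * (sqrt 2 * sqrt (L\<^sup>2 + 4 * \<nu>1\<^sup>2 / n0)))\<^sup>2 \<le> 1\<^sup>2"
    using gamma_le gamma_pos n0 unfolding n0_def[symmetric] by (intro power_mono) auto
  then have "\<gamma>\<^sup>2 * (2 * (L\<^sup>2 + 4 * \<nu>1\<^sup>2 / n0)) \<le> 1"
    using n0 by (simp add: power_mult_distrib)
  ultimately have "\<gamma>\<^sup>2 * (2 * L\<^sup>2 + 4 * \<nu>1\<^sup>2 / real (N k)) \<le> \<gamma>\<^sup>2 * (2 * (L\<^sup>2 + 4 * \<nu>1\<^sup>2 / n0))"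
    by (intro mult_left_mono) auto
  with \<open>\<gamma>\<^sup>2 * (2 * (L\<^sup>2 + 4 * \<nu>1\<^sup>2 / n0)) \<le> 1\<close> show ?thesis by (simp add: algebra_simps)
qed

lemma square_integrable_x_xh: "integrable M (\<lambda>\<omega>. (norm (x k \<omega> - xh k \<omega>))\<^sup>2)"
  by (rule square_integrable_diff_X[OF _ _ square_integrable_x xh_in_X]) measurable

lemma integrable_Q: "integrable M (Q k)"
  unfolding Q_def[abs_def]
  using square_integrable_x_xh square_integrable_noise square_integrable_noise_half
    integrable_noise_half_ghost
  by simp

lemma integral_x_squared_le:
  "(\<integral>\<omega>. (norm (x k \<omega>))\<^sup>2 \<partial>M) \<le> 2 * (\<integral>\<omega>. (norm (x k \<omega> - xh k \<omega>))\<^sup>2 \<partial>M) + 2 * R_X\<^sup>2"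
proof -
  have "(\<integral>\<omega>. (norm (x k \<omega>))\<^sup>2 \<partial>M) \<le> (\<integral>\<omega>. 2 * (norm (x k \<omega> - xh k \<omega>))\<^sup>2 + 2 * R_X\<^sup>2 \<partial>M)"
  proof (rule integral_mono[OF square_integrable_x])
    show "integrable M (\<lambda>\<omega>. 2 * (norm (x k \<omega> - xh k \<omega>))\<^sup>2 + 2 * R_X\<^sup>2)"
      using square_integrable_x_xh by simp
    fix \<omega> assume \<omega>: "\<omega> \<in> space M"
    have "(norm (xh k \<omega>))\<^sup>2 \<le> R_X\<^sup>2" using norm_le_R_X[OF xh_in_X[OF \<omega>]] by (intro power_mono) auto
    then show "(norm (x k \<omega>))\<^sup>2 \<le> 2 * (norm (x k \<omega> - xh k \<omega>))\<^sup>2 + 2 * R_X\<^sup>2"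
      using norm_add_squared_le[of "x k \<omega> - xh k \<omega>" "xh k \<omega>"] by simp
  qed
  then show ?thesis using square_integrable_x_xh by (simp add: P.prob_space)
qed

lemma integral_Q_le: "(\<integral>\<omega>. Q k \<omega> \<partial>M) \<le> 7 * \<gamma>\<^sup>2 * (\<nu>1\<^sup>2 * R_X\<^sup>2 + \<nu>2\<^sup>2) / real (N k)"
proof -
  define t where "t = 1 / real (N k)"
  have t: "t > 0" unfolding t_def using N_pos[of k] by simp
  define E where "E = (\<integral>\<omega>. (norm (x k \<omega> - xh k \<omega>))\<^sup>2 \<partial>M)"
  define Mx where "Mx = (\<integral>\<omega>. (norm (x k \<omega>))\<^sup>2 \<partial>M)"
  define EW where "EW = (\<integral>\<omega>. (norm (noise k \<omega>))\<^sup>2 \<partial>M)"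
  define EV where "EV = (\<integral>\<omega>. (norm (noise_half k \<omega>))\<^sup>2 \<partial>M)"
  have "E \<ge> 0" unfolding E_def by simp
  have Q: "(\<integral>\<omega>. Q k \<omega> \<partial>M) = (2 * \<gamma>\<^sup>2 * L\<^sup>2 - 1) * E + 2 * \<gamma>\<^sup>2 * EW + 3 * \<gamma>\<^sup>2 * EV"
    unfolding Q_def E_def EW_def EV_def
    using square_integrable_x_xh square_integrable_noise square_integrable_noise_half
      integrable_noise_half_ghost integral_noise_half_ghost
    by simp
  have Mx: "Mx \<le> 2 * E + 2 * R_X\<^sup>2" unfolding Mx_def E_def by (rule integral_x_squared_le)
  have "EW \<le> (\<nu>1\<^sup>2 * Mx + \<nu>2\<^sup>2) * t"
    using integral_noise_squared_le unfolding EW_def Mx_def t_def by simp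
  also have "\<dots> \<le> (\<nu>1\<^sup>2 * (2 * E + 2 * R_X\<^sup>2) + \<nu>2\<^sup>2) * t"
    using Mx t by (intro mult_right_mono add_right_mono mult_left_mono) auto
  finally have EW: "2 * \<gamma>\<^sup>2 * EW \<le> 2 * \<gamma>\<^sup>2 * ((\<nu>1\<^sup>2 * (2 * E + 2 * R_X\<^sup>2) + \<nu>2\<^sup>2) * t)"
    by (intro mult_left_mono) auto
  have "EV \<le> (\<nu>1\<^sup>2 * R_X\<^sup>2 + \<nu>2\<^sup>2) * t"
    using integral_noise_half_squared_le unfolding EV_def t_def by simp
  then have EV: "3 * \<gamma>\<^sup>2 * EV \<le> 3 * \<gamma>\<^sup>2 * ((\<nu>1\<^sup>2 * R_X\<^sup>2 + \<nu>2\<^sup>2) * t)"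
    by (intro mult_left_mono) auto
  have "(2 * \<gamma>\<^sup>2 * L\<^sup>2 + 4 * \<gamma>\<^sup>2 * \<nu>1\<^sup>2 * t - 1) * E \<le> 0"
    using step_size_le[of k] \<open>E \<ge> 0\<close> unfolding t_def by (intro mult_nonpos_nonneg) auto
  moreover have "\<gamma>\<^sup>2 * \<nu>2\<^sup>2 * t \<ge> 0" using t by simp
  ultimately have "(\<integral>\<omega>. Q k \<omega> \<partial>M) \<le> 7 * \<gamma>\<^sup>2 * (\<nu>1\<^sup>2 * R_X\<^sup>2 + \<nu>2\<^sup>2) * t"
    using Q EW EV by (simp add: algebra_simps)
  then show ?thesis unfolding t_def by simp
qed

lemma sum_inverse_N_bounded: "\<exists>S. \<forall>K. (\<Sum>k<K. 1 / real (N k)) \<le> S"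
proof -
  obtain S where S: "\<And>K. (\<Sum>k=1..K. 1 / real (N k)) < S" using N_sum by blast
  have "(\<Sum>k<K. 1 / real (N k)) \<le> 1 + S" for K
  proof -
    have "(\<Sum>k<K. 1 / real (N k)) \<le> (\<Sum>k\<le>K. 1 / real (N k))"
      by (intro sum_mono2) auto
    also have "\<dots> = 1 / real (N 0) + (\<Sum>k=1..K. 1 / real (N k))"
      by (simp add: atMost_atLeast0 sum.atLeast_Suc_atMost)
    also have "\<dots> \<le> 1 + S"
      using S[of K] N_pos[of 0] by (simp add: add_mono less_imp_le)
    finally show ?thesis .
  qed
  then show ?thesis by blast
qed

lemma integrable_gap_x_avg:
  assumes K: "K \<ge> 1"
  shows "integrable M (\<lambda>\<omega>. gap X F (x_avg K \<omega>))"
proof (rule P.integrable_const_bound[where B="B_F * (R_X + R_X)"])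
  show "(\<lambda>\<omega>. gap X F (x_avg K \<omega>)) \<in> borel_measurable M"
    using borel_measurable_continuous_onI[OF lipschitz_on_continuous_on[OF
          lipschitz_on_gap[where F=F and B=B_F and R=R_X, OF norm_F_le_B_F norm_le_R_X X_ne]]]
    by measurable
  have "norm (gap X F (x_avg K \<omega>)) \<le> B_F * (R_X + R_X)" if \<omega>: "\<omega> \<in> space M" for \<omega>
  proof -
    have "norm (\<Sum>k<K. xh k \<omega>) \<le> (\<Sum>k<K. norm (xh k \<omega>))" by (rule norm_sum)
    also have "\<dots> \<le> (\<Sum>k<K. R_X)" using norm_le_R_X[OF xh_in_X[OF \<omega>]] by (intro sum_mono)
    finally have "norm (\<Sum>k<K. xh k \<omega>) \<le> real K * R_X" by simp
    then have "norm (x_avg K \<omega>) \<le> R_X" using K by (simp add: field_simps)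
    then have "B_F * (norm (x_avg K \<omega>) + R_X) \<le> B_F * (R_X + R_X)"
      using B_F_nonneg by (intro mult_left_mono) auto
    then show ?thesis
      using abs_gap_le[where F=F and B=B_F and R=R_X and z="x_avg K \<omega>", OF norm_F_le_B_F norm_le_R_X X_ne]
      by simp
  qed
  then show "AE \<omega> in M. norm (gap X F (x_avg K \<omega>)) \<le> B_F * (R_X + R_X)" by (intro AE_I2)
qed

lemma expected_gap_le:
  "\<exists>c. \<forall>K\<ge>1. integrable M (\<lambda>\<omega>. gap X F (x_avg K \<omega>)) \<and> (\<integral>\<omega>. gap X F (x_avg K \<omega>) \<partial>M) \<le> c / real K"
proof -
  obtain S where S: "\<And>K. (\<Sum>k<K. 1 / real (N k)) \<le> S" using sum_inverse_N_bounded by blast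
  define c1 where "c1 = 7 * \<gamma>\<^sup>2 * (\<nu>1\<^sup>2 * R_X\<^sup>2 + \<nu>2\<^sup>2)"
  have "(\<integral>\<omega>. gap X F (x_avg K \<omega>) \<partial>M) \<le> ((Phi0_bound + c1 * S) / (2 * \<gamma>)) / real K" if K: "K \<ge> 1" for K
  proof -
    have Q_sum_int: "integrable M (\<lambda>\<omega>. \<Sum>k<K. Q k \<omega>)"
      by (intro Bochner_Integration.integrable_sum integrable_Q)
    have "(\<integral>\<omega>. gap X F (x_avg K \<omega>) \<partial>M) \<le> (\<integral>\<omega>. (Phi0_bound + (\<Sum>k<K. Q k \<omega>)) / (2 * \<gamma> * real K) \<partial>M)"
      using Q_sum_int by (intro integral_mono integrable_gap_x_avg[OF K] gap_x_avg_le[OF _ K]) auto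
    also have "\<dots> = (Phi0_bound + (\<Sum>k<K. \<integral>\<omega>. Q k \<omega> \<partial>M)) / (2 * \<gamma> * real K)"
      using Q_sum_int integrable_Q by (simp add: P.prob_space Bochner_Integration.integral_sum)
    also have "\<dots> \<le> (Phi0_bound + c1 * S) / (2 * \<gamma> * real K)"
    proof (rule divide_right_mono)
      have "(\<Sum>k<K. \<integral>\<omega>. Q k \<omega> \<partial>M) \<le> (\<Sum>k<K. c1 * (1 / real (N k)))"
        using integral_Q_le unfolding c1_def by (intro sum_mono) simp
      also have "\<dots> = c1 * (\<Sum>k<K. 1 / real (N k))" by (simp add: sum_distrib_left)
      also have "\<dots> \<le> c1 * S" using S[of K] by (intro mult_left_mono) (simp_all add: c1_def)
      finally show "Phi0_bound + (\<Sum>k<K. \<integral>\<omega>. Q k \<omega> \<partial>M) \<le> Phi0_bound + c1 * S" by simp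
    qed (use gamma_pos in simp)
    finally show ?thesis by simp
  qed
  then show ?thesis using integrable_gap_x_avg by blast
qed

end

theorem proposition2:
  fixes X :: "'a::euclidean_space set"
    and F :: "'a \<Rightarrow> 'a"
    and Fs :: "'a \<Rightarrow> 'w \<Rightarrow> 'a"
    and P :: "'w measure"
    and M :: "'o measure"
    and s sh :: "nat \<Rightarrow> nat \<Rightarrow> 'o \<Rightarrow> 'w"
    and N :: "nat \<Rightarrow> nat"
    and x xh :: "nat \<Rightarrow> 'o \<Rightarrow> 'a"
    and x0 :: 'a
    and L \<gamma> \<nu>1 \<nu>2 :: real
  assumes X_ne: "X \<noteq> {}" and X_closed: "closed X" and X_convex: "convex X"
    and X_diam: "\<exists>D>0. \<forall>u\<in>X. \<forall>v\<in>X. (norm (u - v))\<^sup>2 \<le> D\<^sup>2"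
    \<comment> \<open>sampled map and its mean\<close>
    and P_prob: "prob_space P"
    and Fs_meas: "(\<lambda>(z, w). Fs z w) \<in> borel_measurable (borel \<Otimes>\<^sub>M P)"
    and F_mean: "\<And>z. integrable P (Fs z) \<and> F z = (\<integral>w. Fs z w \<partial>P)"
    \<comment> \<open>(A1)\<close>
    and A1_lip: "L-lipschitz_on UNIV F" and A1_mono: "monotone_map F"
    \<comment> \<open>(A2)\<close>
    and A2_ne: "vi_sol X F \<noteq> {}" and A2_compact: "compact (vi_sol X F)"
    and A2_bound: "\<exists>C>0. \<forall>xs\<in>vi_sol X F. norm (F xs) \<le> C"
    \<comment> \<open>samples\<close>
    and M_prob: "prob_space M"
    and s_meas: "\<And>j k. s j k \<in> measurable M P" and sh_meas: "\<And>j k. sh j k \<in> measurable M P"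
    and s_distr: "\<And>j k. distr M P (s j k) = P" and sh_distr: "\<And>j k. distr M P (sh j k) = P"
    \<comment> \<open>(A4)\<close>
    and nu_nonneg: "\<nu>1 \<ge> 0" "\<nu>2 \<ge> 0"
    and A4_k: "\<And>k. noise_cond M (hist M P N s sh k) \<nu>1 \<nu>2 (N k)
                  (\<lambda>j \<omega>. Fs (x k \<omega>) (s j k \<omega>) - F (x k \<omega>)) (x k)"
    and A4_half: "\<And>k. noise_cond M (hist_half M P N s sh k) \<nu>1 \<nu>2 (N k)
                  (\<lambda>j \<omega>. Fs (xh k \<omega>) (sh j k \<omega>) - F (xh k \<omega>)) (xh k)"
    and A4_indep_k: "\<And>k. cond_indep M (hist M P N s sh k) P {..<N k} (\<lambda>j. s j k)"
    and A4_indep_half: "\<And>k. cond_indep M (hist_half M P N s sh k) P {..<N k} (\<lambda>j. sh j k)"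
    \<comment> \<open>batch sizes and step size\<close>
    and N_pos: "\<And>k. N k \<ge> 1" and N_mono: "mono N"
    and N_sum: "\<exists>Mb. \<forall>K. (\<Sum>k=1..K. 1 / real (N k)) < Mb"
    and gamma_pos: "\<gamma> > 0"
    and gamma_le: "\<gamma> * (sqrt 2 * sqrt (L\<^sup>2 + 4 * \<nu>1\<^sup>2 / real (N 0))) \<le> 1"
    \<comment> \<open>the scheme (v-SSE)\<close>
    and x_init: "\<And>\<omega>. \<omega> \<in> space M \<Longrightarrow> x 0 \<omega> = x0"
    and xh_step: "\<And>k \<omega>. \<omega> \<in> space M \<Longrightarrow>
        xh k \<omega> = closest_point X
          (x k \<omega> - \<gamma> *\<^sub>R ((1 / real (N k)) *\<^sub>R (\<Sum>j<N k. Fs (x k \<omega>) (s j k \<omega>))))"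
    and x_step: "\<And>k \<omega>. \<omega> \<in> space M \<Longrightarrow>
        x (Suc k) \<omega> = closest_point
          {y. (x k \<omega> - \<gamma> *\<^sub>R ((1 / real (N k)) *\<^sub>R (\<Sum>j<N k. Fs (x k \<omega>) (s j k \<omega>))) - xh k \<omega>)
                \<bullet> (y - xh k \<omega>) \<le> 0}
          (x k \<omega> - \<gamma> *\<^sub>R ((1 / real (N k)) *\<^sub>R (\<Sum>j<N k. Fs (xh k \<omega>) (sh j k \<omega>))))"
  shows "(\<exists>c. \<forall>K\<ge>1.
            integrable M (\<lambda>\<omega>. gap X F ((1 / real K) *\<^sub>R (\<Sum>k<K. xh k \<omega>))) \<and>
            (\<integral>\<omega>. gap X F ((1 / real K) *\<^sub>R (\<Sum>k<K. xh k \<omega>)) \<partial>M) \<le> c / real K)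
       \<and> (\<forall>a>1. (\<forall>k. N k = max 1 (nat \<lfloor>real k powr a\<rfloor>)) \<longrightarrow>
            (\<exists>\<epsilon>0>0. \<exists>c. \<forall>\<epsilon>. 0 < \<epsilon> \<and> \<epsilon> \<le> \<epsilon>0 \<longrightarrow>
               (\<exists>K\<ge>1. (\<integral>\<omega>. gap X F ((1 / real K) *\<^sub>R (\<Sum>k<K. xh k \<omega>)) \<partial>M) \<le> \<epsilon> \<and>
                       real (\<Sum>k=1..K. N k) \<le> c / \<epsilon> powr (a + 1))))"
proof -
  interpret vsse X F Fs P M s sh N x xh x0 L \<gamma> \<nu>1 \<nu>2
    by (rule vsse.intro) (fact assms)+
  obtain c where c: "\<forall>K\<ge>1. integrable M (\<lambda>\<omega>. gap X F (x_avg K \<omega>))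
      \<and> (\<integral>\<omega>. gap X F (x_avg K \<omega>) \<partial>M) \<le> c / real K"
    using expected_gap_le by blast
  moreover have "\<exists>\<epsilon>0>0. \<exists>c. \<forall>\<epsilon>. 0 < \<epsilon> \<and> \<epsilon> \<le> \<epsilon>0 \<longrightarrow>
      (\<exists>K\<ge>1. (\<integral>\<omega>. gap X F (x_avg K \<omega>) \<partial>M) \<le> \<epsilon> \<and> real (\<Sum>k=1..K. N k) \<le> c / \<epsilon> powr (a + 1))"
    if "a > 1" "\<forall>k. N k = max 1 (nat \<lfloor>real k powr a\<rfloor>)" for a :: real
    using c that by (intro oracle_complexity[where c=c]) auto
  ultimately show ?thesis by blast
qed

end
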